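(* Let $p$ be a prime and let $\mathcal{F}$ be a fusion system (not necessarily saturated) on a finite $p$-group $S$. Then there exists a left semicharacteristic biset $X$ for $\mathcal{F}$ which contains a subbiset isomorphic to $S\times_{(S,\mathrm{id})} S$.
   Context: A fusion system $\mathcal{F}$ on a finite $p$-group $S$ is a category whose objects are the subgroups of $S$, whose morphism sets $\mathrm{Hom}_{\mathcal{F}}(P,Q)$ are sets of injective group homomorphisms $P\to Q$, such that every map $u\mapsto sus^{-1}$ ($s\in S$, $sPs^{-1}\le Q$) lies in $\mathrm{Hom}_{\mathcal{F}}(P,Q)$, and every $\varphi\in\mathrm{Hom}_{\mathcal{F}}(P,Q)$ induces an isomorphism $P\to\varphi(P)$ in $\mathcal{F}$ whose inverse is also in $\mathcal{F}$; no saturation is assumed. An $S$-$S$-biset is a set with commuting left and right $S$-actions. For $Q\le S$ and an injective homomorphism $\varphi\colon Q\to S$, $S\times_{(Q,\varphi)}S$ denotes the transitive $S$-$S$-biset $(S\times S)/\!\sim$ where $(xu,y)\sim(x,\varphi(u)y)$ for $x,y\in S$, $u\in Q$, with $S$ acting by left multiplication on the first factor and right multiplication on the second. For an $S$-$S$-biset $X$ and $Q\le S$, ${}_QX$ is the $Q$-$S$-biset obtained by restricting the left action to $Q$, and for $\varphi\colon Q\to S$, ${}_\varphi X$ is the $Q$-$S$-biset with the same underlying set, the same right action, and left action $u\cdot x=\varphi(u)x$. A left semicharacteristic biset for $\mathcal{F}$ is a finite $S$-$S$-biset $X$ such that: (1) ($\mathcal{F}$-generated) every transitive subbiset of $X$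 is isomorphic to $S\times_{(Q,\varphi)}S$ for some $Q\le S$ and some $\varphi\in\mathrm{Hom}_{\mathcal{F}}(Q,S)$; (2) (left $\mathcal{F}$-stable) ${}_QX\cong{}_\varphi X$ as $Q$-$S$-bisets for every $Q\le S$ and every $\varphi\in\mathrm{Hom}_{\mathcal{F}}(Q,S)$. *)

theory Defs
  imports "HOL-Algebra.Algebra"
begin

definition finite_p_group :: "nat \<Rightarrow> ('a, 'm) monoid_scheme \<Rightarrow> bool" where
  "finite_p_group p S \<longleftrightarrow> group S \<and> finite (carrier S) \<and> (\<exists>n. card (carrier S) = p ^ n)"

text \<open>A (not necessarily saturated) fusion system on S.  F P Q is the set of
  morphisms Hom_F(P,Q); morphisms are functions extensional on their domain.\<close>
definition fusion_system :: "('a, 'm) monoid_scheme \<Rightarrow> ('a set \<Rightarrow> 'a set \<Rightarrow> ('a \<Rightarrow> 'a) set) \<Rightarrow> bool" where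
  "fusion_system S F \<longleftrightarrow>
     (\<forall>P Q. F P Q \<noteq> {} \<longrightarrow> subgroup P S \<and> subgroup Q S) \<and>
     (\<forall>P Q. \<forall>\<phi>\<in>F P Q. \<phi> \<in> extensional P \<and> \<phi> \<in> hom (S\<lparr>carrier := P\<rparr>) S \<and>
                        \<phi> ` P \<subseteq> Q \<and> inj_on \<phi> P) \<and>
     (\<forall>P Q s. subgroup P S \<longrightarrow> subgroup Q S \<longrightarrow> s \<in> carrier S \<longrightarrow>
        (\<lambda>u. s \<otimes>\<^bsub>S\<^esub> u \<otimes>\<^bsub>S\<^esub> inv\<^bsub>S\<^esub> s) ` P \<subseteq> Q \<longrightarrow>
        restrict (\<lambda>u. s \<otimes>\<^bsub>S\<^esub> u \<otimes>\<^bsub>S\<^esub> inv\<^bsub>S\<^esub> s) P \<in> F P Q) \<and>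
     (\<forall>P Q \<phi>. \<phi> \<in> F P Q \<longrightarrow>
        \<phi> \<in> F P (\<phi> ` P) \<and> restrict (inv_into P \<phi>) (\<phi> ` P) \<in> F (\<phi> ` P) P) \<and>
     (\<forall>P Q R \<phi> \<psi>. \<phi> \<in> F P Q \<longrightarrow> \<psi> \<in> F Q R \<longrightarrow> restrict (\<psi> \<circ> \<phi>) P \<in> F P R)"

definition biset :: "('a, 'm) monoid_scheme \<Rightarrow> 'b set \<Rightarrow> ('a \<Rightarrow> 'b \<Rightarrow> 'b) \<Rightarrow> ('b \<Rightarrow> 'a \<Rightarrow> 'b) \<Rightarrow> bool" where
  "biset S BX l r \<longleftrightarrow>
     (\<forall>x\<in>BX. \<forall>s\<in>carrier S. l s x \<in> BX \<and> r x s \<in> BX) \<and>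
     (\<forall>x\<in>BX. l (one S) x = x \<and> r x (one S) = x) \<and>
     (\<forall>x\<in>BX. \<forall>s\<in>carrier S. \<forall>t\<in>carrier S.
        l s (l t x) = l (s \<otimes>\<^bsub>S\<^esub> t) x \<and> r (r x s) t = r x (s \<otimes>\<^bsub>S\<^esub> t) \<and>
        l s (r x t) = r (l s x) t)"

definition biset_iso :: "'a set \<Rightarrow> 'a set \<Rightarrow> 'b set \<Rightarrow> ('a \<Rightarrow> 'b \<Rightarrow> 'b) \<Rightarrow> ('b \<Rightarrow> 'a \<Rightarrow> 'b)
     \<Rightarrow> 'c set \<Rightarrow> ('a \<Rightarrow> 'c \<Rightarrow> 'c) \<Rightarrow> ('c \<Rightarrow> 'a \<Rightarrow> 'c) \<Rightarrow> bool" where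
  "biset_iso L R BX l r Y l' r' \<longleftrightarrow>
     (\<exists>f. bij_betw f BX Y \<and>
          (\<forall>x\<in>BX. \<forall>a\<in>L. f (l a x) = l' a (f x)) \<and>
          (\<forall>x\<in>BX. \<forall>b\<in>R. f (r x b) = r' (f x) b))"

definition subbiset :: "('a, 'm) monoid_scheme \<Rightarrow> 'b set \<Rightarrow> ('a \<Rightarrow> 'b \<Rightarrow> 'b) \<Rightarrow> ('b \<Rightarrow> 'a \<Rightarrow> 'b) \<Rightarrow> 'b set \<Rightarrow> bool" where
  "subbiset S BX l r Y \<longleftrightarrow> Y \<subseteq> BX \<and>
     (\<forall>y\<in>Y. \<forall>s\<in>carrier S. l s y \<in> Y \<and> r y s \<in> Y)"

definition transitive_subbiset :: "('a, 'm) monoid_scheme \<Rightarrow> 'b set \<Rightarrow> ('a \<Rightarrow> 'b \<Rightarrow> 'b) \<Rightarrow> ('b \<Rightarrow> 'a \<Rightarrow> 'b) \<Rightarrow> 'b set \<Rightarrow> bool" where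
  "transitive_subbiset S BX l r Y \<longleftrightarrow> subbiset S BX l r Y \<and> Y \<noteq> {} \<and>
     (\<forall>y\<in>Y. \<forall>z\<in>Y. \<exists>s\<in>carrier S. \<exists>t\<in>carrier S. z = l s (r y t))"

text \<open>The transitive biset S \<times>_(Q,\<phi>) S = (S \<times> S)/\<sim>, (x u, y) \<sim> (x, \<phi>(u) y).\<close>
definition tb_rel :: "('a, 'm) monoid_scheme \<Rightarrow> 'a set \<Rightarrow> ('a \<Rightarrow> 'a) \<Rightarrow> (('a \<times> 'a) \<times> ('a \<times> 'a)) set" where
  "tb_rel S Q \<phi> = {((x \<otimes>\<^bsub>S\<^esub> u, y), (x, \<phi> u \<otimes>\<^bsub>S\<^esub> y)) | x y u.
                      x \<in> carrier S \<and> y \<in> carrier S \<and> u \<in> Q}"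

definition tb_carrier :: "('a, 'm) monoid_scheme \<Rightarrow> 'a set \<Rightarrow> ('a \<Rightarrow> 'a) \<Rightarrow> ('a \<times> 'a) set set" where
  "tb_carrier S Q \<phi> = (carrier S \<times> carrier S) // ((tb_rel S Q \<phi> \<union> (tb_rel S Q \<phi>)\<inverse>)\<^sup>*)"

definition tb_left :: "('a, 'm) monoid_scheme \<Rightarrow> 'a \<Rightarrow> ('a \<times> 'a) set \<Rightarrow> ('a \<times> 'a) set" where
  "tb_left S s C = (\<lambda>(x, y). (s \<otimes>\<^bsub>S\<^esub> x, y)) ` C"

definition tb_right :: "('a, 'm) monoid_scheme \<Rightarrow> ('a \<times> 'a) set \<Rightarrow> 'a \<Rightarrow> ('a \<times> 'a) set" where
  "tb_right S C t = (\<lambda>(x, y). (x, y \<otimes>\<^bsub>S\<^esub> t)) ` C"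

definition left_semichar_biset :: "('a, 'm) monoid_scheme \<Rightarrow> ('a set \<Rightarrow> 'a set \<Rightarrow> ('a \<Rightarrow> 'a) set)
     \<Rightarrow> 'b set \<Rightarrow> ('a \<Rightarrow> 'b \<Rightarrow> 'b) \<Rightarrow> ('b \<Rightarrow> 'a \<Rightarrow> 'b) \<Rightarrow> bool" where
  "left_semichar_biset S F BX l r \<longleftrightarrow>
     biset S BX l r \<and> finite BX \<and>
     (\<forall>Y. transitive_subbiset S BX l r Y \<longrightarrow>
        (\<exists>Q \<phi>. subgroup Q S \<and> \<phi> \<in> F Q (carrier S) \<and>
           biset_iso (carrier S) (carrier S) Y l r (tb_carrier S Q \<phi>) (tb_left S) (tb_right S))) \<and>
     (\<forall>Q \<phi>. subgroup Q S \<longrightarrow> \<phi> \<in> F Q (carrier S) \<longrightarrow>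
        biset_iso Q (carrier S) BX l r BX (\<lambda>u x. l (\<phi> u) x) r)"

end

theory Submission
  imports Defs
begin

text \<open>
  For every \<open>\<theta> \<in> Hom\<^bsub>\<F>\<^esub>(R, S)\<close> take \<open>|R| \<cdot> k(R, \<theta>)\<close> copies of \<open>S \<times>\<^bsub>(R, \<theta>)\<^esub> S\<close>, where the
  weights \<open>k\<close> are chosen, top-down along the subgroup order, so that
  \<open>k(P, \<chi>) + \<Sum>{k(R, \<theta>) | (R, \<theta>) strictly extends (P, \<chi>)}\<close> only depends on \<open>|P|\<close>. Counting pairs
  \<open>(x, y) \<in> S \<times> S\<close>, the number of points of this biset \<open>X\<close> fixed by a twisted diagonal
  \<open>{(u, \<chi> u) | u \<in> P}\<close> is then \<open>|S|\<^sup>2 c(|P|)\<close> if \<open>\<chi> \<in> Hom\<^bsub>\<F>\<^esub>(P, S)\<close> and \<open>0\<close> otherwise. This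
  count is unchanged when \<open>X\<close> is twisted on the left by a morphism \<open>\<phi> \<in> Hom\<^bsub>\<F>\<^esub>(Q, S)\<close>; since \<open>X\<close> is
  right free, the point stabilizers of \<open>Q \<times> S\<close> are such twisted diagonals, so the two
  \<open>Q \<times> S\<close>-sets have the same marks and are isomorphic. Transitive subbisets of \<open>X\<close> are the copies,
  and \<open>S \<times>\<^bsub>(S, id)\<^esub> S\<close> occurs because nothing extends \<open>(S, id)\<close>, so its weight is \<open>c(|S|) > 0\<close>.
\<close>

section \<open>Finite group actions and marks\<close>

definition acts_on :: "('g, 'c) monoid_scheme \<Rightarrow> ('g \<Rightarrow> 'x \<Rightarrow> 'x) \<Rightarrow> 'x set \<Rightarrow> bool" where
  "acts_on H a A \<longleftrightarrow>
     (\<forall>g\<in>carrier H. \<forall>x\<in>A. a g x \<in> A) \<and> (\<forall>x\<in>A. a \<one>\<^bsub>H\<^esub> x = x) \<and>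
     (\<forall>g\<in>carrier H. \<forall>h\<in>carrier H. \<forall>x\<in>A. a g (a h x) = a (g \<otimes>\<^bsub>H\<^esub> h) x)"

definition equivariant_bij :: "('g, 'c) monoid_scheme \<Rightarrow> ('g \<Rightarrow> 'x \<Rightarrow> 'x) \<Rightarrow> 'x set \<Rightarrow>
    ('g \<Rightarrow> 'y \<Rightarrow> 'y) \<Rightarrow> 'y set \<Rightarrow> ('x \<Rightarrow> 'y) \<Rightarrow> bool" where
  "equivariant_bij H a A b B f \<longleftrightarrow> bij_betw f A B \<and> (\<forall>g\<in>carrier H. \<forall>x\<in>A. f (a g x) = b g (f x))"

definition fixed_points :: "('g \<Rightarrow> 'x \<Rightarrow> 'x) \<Rightarrow> 'x set \<Rightarrow> 'g set \<Rightarrow> 'x set" where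
  "fixed_points a A K = {x \<in> A. \<forall>g\<in>K. a g x = x}"

definition same_marks :: "('g, 'c) monoid_scheme \<Rightarrow> ('g \<Rightarrow> 'x \<Rightarrow> 'x) \<Rightarrow> 'x set \<Rightarrow>
    ('g \<Rightarrow> 'y \<Rightarrow> 'y) \<Rightarrow> 'y set \<Rightarrow> bool" where
  "same_marks H a A b B \<longleftrightarrow> (\<forall>K \<in> stabilizer H a ` A \<union> stabilizer H b ` B.
     card (fixed_points a A K) = card (fixed_points b B K))"

lemma fixed_points_Diff: "fixed_points a (A - B) K = fixed_points a A K - fixed_points a B K"
  unfolding fixed_points_def by auto

lemma fixed_points_mono: "B \<subseteq> A \<Longrightarrow> fixed_points a B K \<subseteq> fixed_points a A K"
  unfolding fixed_points_def by auto

lemma finite_fixed_points: "finite A \<Longrightarrow> finite (fixed_points a A K)"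
  unfolding fixed_points_def by simp

lemma card_fixed_points_Diff:
  "B \<subseteq> A \<Longrightarrow> finite A \<Longrightarrow>
    card (fixed_points a (A - B) K) = card (fixed_points a A K) - card (fixed_points a B K)"
  by (simp add: fixed_points_Diff fixed_points_mono card_Diff_subset finite_fixed_points
      finite_subset)

lemma bij_betw_fixed_points:
  assumes f: "bij_betw f A B" and eqv: "\<And>g z. g \<in> K \<Longrightarrow> z \<in> A \<Longrightarrow> a g z \<in> A \<and> f (a g z) = b g (f z)"
  shows "bij_betw f (fixed_points a A K) (fixed_points b B K)"
proof -
  have inj: "inj_on f A" and img: "f ` A = B" using f by (auto simp: bij_betw_def)
  have fixed_iff: "(\<forall>g\<in>K. a g z = z) \<longleftrightarrow> (\<forall>g\<in>K. b g (f z) = f z)" if "z \<in> A" for z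
    using that eqv inj_onD[OF inj] by metis
  show ?thesis
    unfolding bij_betw_def fixed_points_def
    using inj_on_subset[OF inj] fixed_iff img by (auto simp: image_iff)
qed

lemma stabilizer_subset_carrier: "stabilizer H a x \<subseteq> carrier H"
  unfolding stabilizer_def by auto

lemma self_fixed_by_stabilizer: "x \<in> A \<Longrightarrow> x \<in> fixed_points a A (stabilizer H a x)"
  unfolding fixed_points_def stabilizer_def by simp

lemma subset_stabilizer_if_fixed:
  "x \<in> fixed_points a A K \<Longrightarrow> K \<subseteq> carrier H \<Longrightarrow> K \<subseteq> stabilizer H a x"
  unfolding fixed_points_def stabilizer_def by auto

lemma fixed_points_nonempty_if_same_mark:
  assumes "w \<in> D" and "finite D"
    and "card (fixed_points c C (stabilizer H d w)) = card (fixed_points d D (stabilizer H d w))"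
  shows "fixed_points c C (stabilizer H d w) \<noteq> {}"
proof -
  have "card (fixed_points d D (stabilizer H d w)) \<noteq> 0"
    using self_fixed_by_stabilizer[OF assms(1), of d] finite_fixed_points[OF assms(2)]
    by (auto simp: card_gt_0_iff)
  then show ?thesis using assms(3) by auto
qed

lemma same_marks_empty: "finite B \<Longrightarrow> same_marks H a {} b B \<Longrightarrow> B = {}"
  using fixed_points_nonempty_if_same_mark[of _ B a "{}" H b]
  unfolding same_marks_def fixed_points_def by auto

context group
begin

lemma acts_on_closed: "acts_on G a A \<Longrightarrow> g \<in> carrier G \<Longrightarrow> x \<in> A \<Longrightarrow> a g x \<in> A"
  and acts_on_one: "acts_on G a A \<Longrightarrow> x \<in> A \<Longrightarrow> a \<one> x = x"
  and acts_on_mult: "acts_on G a A \<Longrightarrow> g \<in> carrier G \<Longrightarrow> h \<in> carrier G \<Longrightarrow> x \<in> A \<Longrightarrow>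
    a g (a h x) = a (g \<otimes> h) x"
  unfolding acts_on_def by blast+

lemma acts_on_inv_cancel: "acts_on G a A \<Longrightarrow> g \<in> carrier G \<Longrightarrow> x \<in> A \<Longrightarrow> a (inv g) (a g x) = x"
  by (simp add: acts_on_mult acts_on_one)

lemma acts_on_eq_iff_stabilizer:
  assumes A: "acts_on G a A" and g: "g \<in> carrier G" and h: "h \<in> carrier G" and x: "x \<in> A"
  shows "a g x = a h x \<longleftrightarrow> inv h \<otimes> g \<in> stabilizer G a x"
proof -
  have "a g x = a h (a (inv h \<otimes> g) x)"
    using g h by (simp add: acts_on_mult[OF A _ _ x] m_assoc[symmetric])
  moreover have "a (inv h \<otimes> g) x = a (inv h) (a g x)"
    using g h by (simp add: acts_on_mult[OF A _ _ x])
  ultimately show ?thesis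
    using g h acts_on_inv_cancel[OF A h x] unfolding stabilizer_def by auto
qed

lemma orbit_eq_image: "orbit G a x = (\<lambda>g. a g x) ` carrier G"
  unfolding orbit_def by auto

lemma orbit_subset: "acts_on G a A \<Longrightarrow> x \<in> A \<Longrightarrow> orbit G a x \<subseteq> A"
  unfolding orbit_eq_image by (auto intro: acts_on_closed)

lemma self_in_orbit: "acts_on G a A \<Longrightarrow> x \<in> A \<Longrightarrow> x \<in> orbit G a x"
  unfolding orbit_eq_image using acts_on_one[of a A x] by (auto intro!: image_eqI[of _ _ \<one>])

lemma orbit_closed:
  assumes A: "acts_on G a A" and x: "x \<in> A" and g: "g \<in> carrier G" and z: "z \<in> orbit G a x"
  shows "a g z \<in> orbit G a x"
proof -
  obtain h where "h \<in> carrier G" "z = a h x" using z unfolding orbit_eq_image by auto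
  then show ?thesis using acts_on_mult[OF A g _ x] g unfolding orbit_eq_image by auto
qed

lemma acts_on_Diff_orbit:
  assumes A: "acts_on G a A" and x: "x \<in> A"
  shows "acts_on G a (A - orbit G a x)"
proof -
  have "a g z \<notin> orbit G a x" if "g \<in> carrier G" "z \<in> A - orbit G a x" for g z
    using orbit_closed[OF A x inv_closed[OF that(1)]] acts_on_inv_cancel[OF A] that by fastforce
  then show ?thesis using A unfolding acts_on_def by blast
qed

lemma orbits_equivariant_bij_if_stabilizer_eq:
  assumes A: "acts_on G a A" and B: "acts_on G b B" and x: "x \<in> A" and y: "y \<in> B"
    and stab: "stabilizer G a x = stabilizer G b y"
  obtains f where "equivariant_bij G a (orbit G a x) b (orbit G b y) f"
proof -
  have same: "a g x = a h x \<longleftrightarrow> b g y = b h y" if "g \<in> carrier G" "h \<in> carrier G" for g h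
    unfolding acts_on_eq_iff_stabilizer[OF A that x] acts_on_eq_iff_stabilizer[OF B that y] stab ..
  define f where "f z = b (SOME g. g \<in> carrier G \<and> a g x = z) y" for z
  have f_orbit: "f (a g x) = b g y" if g: "g \<in> carrier G" for g
  proof -
    have "\<exists>h. h \<in> carrier G \<and> a h x = a g x" using g by blast
    from someI_ex[OF this] show ?thesis unfolding f_def using same g by blast
  qed
  have "bij_betw f (orbit G a x) (orbit G b y)"
    unfolding bij_betw_def orbit_eq_image
  proof
    show "inj_on f ((\<lambda>g. a g x) ` carrier G)"
      using f_orbit same by (auto simp: inj_on_def)
    show "f ` (\<lambda>g. a g x) ` carrier G = (\<lambda>g. b g y) ` carrier G"
      unfolding image_image using f_orbit by (simp cong: image_cong)
  qed
  moreover have "f (a g z) = b g (f z)" if g: "g \<in> carrier G" and z: "z \<in> orbit G a x" for g z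
  proof -
    obtain h where h: "h \<in> carrier G" "z = a h x" using z unfolding orbit_eq_image by auto
    then show ?thesis
      using g f_orbit acts_on_mult[OF A g h(1) x] acts_on_mult[OF B g h(1) y] by simp
  qed
  ultimately show ?thesis using that unfolding equivariant_bij_def by blast
qed

text \<open>A point with maximal stabilizer in \<open>A\<close> is matched, via the marks, by a point of \<open>B\<close>
  whose stabilizer contains it, and then by a point of \<open>A\<close> whose stabilizer contains that one.\<close>

lemma exists_points_with_equal_stabilizers:
  assumes fin: "finite (carrier G)" and fA: "finite A" and fB: "finite B" and ne: "A \<noteq> {}"
    and marks: "same_marks G a A b B"
  obtains x y where "x \<in> A" "y \<in> B" "stabilizer G a x = stabilizer G b y"
proof -
  have fin_stab: "finite (stabilizer G c w)" for c :: "'a \<Rightarrow> 'z \<Rightarrow> 'z" and w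
    using finite_subset[OF stabilizer_subset_carrier fin] .
  obtain x where x: "x \<in> A"
    and x_max: "\<And>x'. x' \<in> A \<Longrightarrow> card (stabilizer G a x') \<le> card (stabilizer G a x)"
  proof -
    have "Max ((\<lambda>x. card (stabilizer G a x)) ` A) \<in> (\<lambda>x. card (stabilizer G a x)) ` A"
      using fA ne by (intro Max_in) auto
    then obtain x where "x \<in> A" "card (stabilizer G a x) = Max ((\<lambda>x. card (stabilizer G a x)) ` A)"
      by auto
    then show ?thesis using that fA by simp
  qed
  have "card (fixed_points b B (stabilizer G a x)) = card (fixed_points a A (stabilizer G a x))"
    using marks x unfolding same_marks_def by simp
  then have "fixed_points b B (stabilizer G a x) \<noteq> {}"
    by (rule fixed_points_nonempty_if_same_mark[OF x fA])
  then obtain y where y_fix: "y \<in> fixed_points b B (stabilizer G a x)" by blast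
  then have y: "y \<in> B" unfolding fixed_points_def by simp
  have xy: "stabilizer G a x \<subseteq> stabilizer G b y"
    by (rule subset_stabilizer_if_fixed[OF y_fix stabilizer_subset_carrier])
  have "card (fixed_points a A (stabilizer G b y)) = card (fixed_points b B (stabilizer G b y))"
    using marks y unfolding same_marks_def by simp
  then have "fixed_points a A (stabilizer G b y) \<noteq> {}"
    by (rule fixed_points_nonempty_if_same_mark[OF y fB])
  then obtain x' where x'_fix: "x' \<in> fixed_points a A (stabilizer G b y)" by blast
  then have x': "x' \<in> A" unfolding fixed_points_def by simp
  have "stabilizer G b y \<subseteq> stabilizer G a x'"
    by (rule subset_stabilizer_if_fixed[OF x'_fix stabilizer_subset_carrier])
  then have "card (stabilizer G b y) \<le> card (stabilizer G a x)"
    using x_max[OF x'] card_mono[OF fin_stab] by (meson le_trans)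
  then have "stabilizer G a x = stabilizer G b y"
    using xy by (simp add: card_seteq fin_stab)
  with x y that show ?thesis by blast
qed

lemma same_marks_Diff_orbits:
  assumes A: "acts_on G a A" and B: "acts_on G b B" and fA: "finite A" and fB: "finite B"
    and x: "x \<in> A" and y: "y \<in> B" and stab: "stabilizer G a x = stabilizer G b y"
    and marks: "same_marks G a A b B"
  shows "same_marks G a (A - orbit G a x) b (B - orbit G b y)"
proof -
  have orbits: "card (fixed_points a (orbit G a x) K) = card (fixed_points b (orbit G b y) K)"
    if "K \<subseteq> carrier G" for K
  proof -
    obtain f where "equivariant_bij G a (orbit G a x) b (orbit G b y) f"
      by (rule orbits_equivariant_bij_if_stabilizer_eq[OF A B x y stab])
    then have "bij_betw f (fixed_points a (orbit G a x) K) (fixed_points b (orbit G b y) K)"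
      using that orbit_closed[OF A x] unfolding equivariant_bij_def
      by (intro bij_betw_fixed_points) auto
    then show ?thesis by (rule bij_betw_same_card)
  qed
  show ?thesis
    unfolding same_marks_def
  proof (intro ballI)
    fix K assume "K \<in> stabilizer G a ` (A - orbit G a x) \<union> stabilizer G b ` (B - orbit G b y)"
    then have "K \<subseteq> carrier G" and "card (fixed_points a A K) = card (fixed_points b B K)"
      using marks unfolding same_marks_def by (auto simp: stabilizer_def)
    with orbits show "card (fixed_points a (A - orbit G a x) K) = card (fixed_points b (B - orbit G b y) K)"
      by (simp add: card_fixed_points_Diff orbit_subset[OF A x] orbit_subset[OF B y] fA fB)
  qed
qed

lemma equivariant_bij_extend_by_orbit:
  assumes A: "acts_on G a A" and B: "acts_on G b B" and x: "x \<in> A" and y: "y \<in> B"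
    and stab: "stabilizer G a x = stabilizer G b y"
    and f': "equivariant_bij G a (A - orbit G a x) b (B - orbit G b y) f'"
  shows "\<exists>f. equivariant_bij G a A b B f"
proof -
  obtain f0 where f0: "equivariant_bij G a (orbit G a x) b (orbit G b y) f0"
    by (rule orbits_equivariant_bij_if_stabilizer_eq[OF A B x y stab])
  define f where "f z = (if z \<in> orbit G a x then f0 z else f' z)" for z
  have "bij_betw f (orbit G a x \<union> (A - orbit G a x)) (orbit G b y \<union> (B - orbit G b y))"
  proof (rule bij_betw_combine)
    have "bij_betw f0 (orbit G a x) (orbit G b y)" using f0 unfolding equivariant_bij_def by blast
    then show "bij_betw f (orbit G a x) (orbit G b y)"
      by (rule bij_betw_cong[THEN iffD1, rotated]) (simp add: f_def)
    have "bij_betw f' (A - orbit G a x) (B - orbit G b y)" using f' unfolding equivariant_bij_def by blast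
    then show "bij_betw f (A - orbit G a x) (B - orbit G b y)"
      by (rule bij_betw_cong[THEN iffD1, rotated]) (simp add: f_def)
  qed auto
  then have "bij_betw f A B"
    using orbit_subset[OF A x] orbit_subset[OF B y] by (simp add: Un_absorb1)
  moreover have "f (a g z) = b g (f z)" if g: "g \<in> carrier G" and z: "z \<in> A" for g z
  proof (cases "z \<in> orbit G a x")
    case True
    then show ?thesis
      using orbit_closed[OF A x g] f0 g unfolding f_def equivariant_bij_def by simp
  next
    case False
    then have "a g z \<in> A - orbit G a x"
      using acts_on_closed[OF acts_on_Diff_orbit[OF A x] g] z by blast
    then show ?thesis using False f' g z unfolding f_def equivariant_bij_def by simp
  qed
  ultimately show ?thesis unfolding equivariant_bij_def by blast
qed

text \<open>Match an orbit of maximal stabilizer in \<open>A\<close> with an orbit of \<open>B\<close> and induct on the rest.\<close>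

lemma equivariant_bij_if_same_marks:
  assumes fin: "finite (carrier G)"
  shows "acts_on G a A \<Longrightarrow> acts_on G b B \<Longrightarrow> finite A \<Longrightarrow> finite B \<Longrightarrow> same_marks G a A b B \<Longrightarrow>
    \<exists>f. equivariant_bij G a A b B f"
proof (induction "card A" arbitrary: A B rule: less_induct)
  case less
  note A = less.prems(1) and B = less.prems(2) and fA = less.prems(3) and fB = less.prems(4)
    and marks = less.prems(5)
  show ?case
  proof (cases "A = {}")
    case True
    then have "B = {}" using same_marks_empty[OF fB] marks by simp
    with True show ?thesis by (auto simp: equivariant_bij_def bij_betw_def)
  next
    case False
    obtain x y where x: "x \<in> A" and y: "y \<in> B" and stab: "stabilizer G a x = stabilizer G b y"
      using exists_points_with_equal_stabilizers[OF fin fA fB False marks] by blast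
    have "card (A - orbit G a x) < card A"
      using self_in_orbit[OF A x] fA x by (intro psubset_card_mono) auto
    moreover have "finite (A - orbit G a x)" "finite (B - orbit G b y)" using fA fB by auto
    ultimately have "\<exists>f'. equivariant_bij G a (A - orbit G a x) b (B - orbit G b y) f'"
      by (rule less.hyps[OF _ acts_on_Diff_orbit[OF A x] acts_on_Diff_orbit[OF B y] _ _
            same_marks_Diff_orbits[OF A B fA fB x y stab marks]])
    then show ?thesis using equivariant_bij_extend_by_orbit[OF A B x y stab] by blast
  qed
qed

end

section \<open>The transitive bisets \<open>S \<times>\<^bsub>(R, \<theta>)\<^esub> S\<close>\<close>

definition tb_class :: "('a, 'm) monoid_scheme \<Rightarrow> 'a set \<Rightarrow> ('a \<Rightarrow> 'a) \<Rightarrow> 'a \<Rightarrow> 'a \<Rightarrow> ('a \<times> 'a) set" where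
  "tb_class G R \<theta> x y = (\<lambda>r. (x \<otimes>\<^bsub>G\<^esub> r, inv\<^bsub>G\<^esub> (\<theta> r) \<otimes>\<^bsub>G\<^esub> y)) ` R"

definition tb_equiv :: "('a, 'm) monoid_scheme \<Rightarrow> 'a set \<Rightarrow> ('a \<Rightarrow> 'a) \<Rightarrow> (('a \<times> 'a) \<times> ('a \<times> 'a)) set" where
  "tb_equiv G R \<theta> = (tb_rel G R \<theta> \<union> (tb_rel G R \<theta>)\<inverse>)\<^sup>*"

lemma equiv_tb_equiv: "equiv UNIV (tb_equiv G R \<theta>)"
  unfolding tb_equiv_def by (intro equivI refl_onI trans_rtrancl sym_rtrancl sym_Un_converse) auto

lemma tb_carrier_quotient: "tb_carrier G R \<theta> = (carrier G \<times> carrier G) // tb_equiv G R \<theta>"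
  unfolding tb_carrier_def tb_equiv_def ..

lemma tb_carrier_disjoint:
  "C \<in> tb_carrier G R \<theta> \<Longrightarrow> D \<in> tb_carrier G R \<theta> \<Longrightarrow> C \<noteq> D \<Longrightarrow> C \<inter> D = {}"
  using quotient_disj[OF equiv_tb_equiv] unfolding tb_carrier_quotient quotient_def by blast

context group
begin

lemma mult_inv_cancel_left [simp]:
  "x \<in> carrier G \<Longrightarrow> u \<in> carrier G \<Longrightarrow> x \<otimes> (inv x \<otimes> u) = u"
  "x \<in> carrier G \<Longrightarrow> u \<in> carrier G \<Longrightarrow> inv x \<otimes> (x \<otimes> u) = u"
  by (simp_all add: m_assoc[symmetric])

lemma tb_left_one: "C \<subseteq> carrier G \<times> carrier G \<Longrightarrow> tb_left G \<one> C = C"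
  unfolding tb_left_def by (force simp: image_iff)

lemma tb_right_one: "C \<subseteq> carrier G \<times> carrier G \<Longrightarrow> tb_right G C \<one> = C"
  unfolding tb_right_def by (force simp: image_iff)

lemma tb_left_mult:
  "C \<subseteq> carrier G \<times> carrier G \<Longrightarrow> s \<in> carrier G \<Longrightarrow> t \<in> carrier G \<Longrightarrow>
    tb_left G s (tb_left G t C) = tb_left G (s \<otimes> t) C"
  unfolding tb_left_def image_image by (rule image_cong) (auto simp: m_assoc)

lemma tb_right_mult:
  "C \<subseteq> carrier G \<times> carrier G \<Longrightarrow> s \<in> carrier G \<Longrightarrow> t \<in> carrier G \<Longrightarrow>
    tb_right G (tb_right G C s) t = tb_right G C (s \<otimes> t)"
  unfolding tb_right_def image_image by (rule image_cong) (auto simp: m_assoc)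

lemma tb_left_right_commute: "tb_left G s (tb_right G C t) = tb_right G (tb_left G s C) t"
  unfolding tb_left_def tb_right_def image_image by (rule image_cong) auto

end

locale subgroup_morphism = group G for G (structure) +
  fixes R and \<theta>
  assumes subgroup_R: "subgroup R G" and hom_\<theta>: "\<theta> \<in> hom (G\<lparr>carrier := R\<rparr>) G"
begin

lemma R_closed: "r \<in> R \<Longrightarrow> r \<in> carrier G"
  using subgroup.subset[OF subgroup_R] by blast

lemma \<theta>_closed: "r \<in> R \<Longrightarrow> \<theta> r \<in> carrier G"
  using hom_\<theta> unfolding hom_def by auto

lemma \<theta>_mult: "r \<in> R \<Longrightarrow> s \<in> R \<Longrightarrow> \<theta> (r \<otimes> s) = \<theta> r \<otimes> \<theta> s"
  using hom_\<theta> unfolding hom_def by auto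

lemma \<theta>_group_hom: "group_hom (G\<lparr>carrier := R\<rparr>) G \<theta>"
  by (intro group_hom.intro group_hom_axioms.intro subgroup.subgroup_is_group[OF subgroup_R is_group]
      is_group hom_\<theta>)

lemma \<theta>_one: "\<theta> \<one> = \<one>"
  using group_hom.hom_one[OF \<theta>_group_hom] by simp

lemma \<theta>_inv: "r \<in> R \<Longrightarrow> \<theta> (inv r) = inv (\<theta> r)"
  using group_hom.hom_inv[OF \<theta>_group_hom, of r] m_inv_consistent[OF subgroup_R, of r] by simp

lemma tb_class_mem: "(a, b) \<in> tb_class G R \<theta> x y \<longleftrightarrow> (\<exists>r\<in>R. a = x \<otimes> r \<and> b = inv (\<theta> r) \<otimes> y)"
  unfolding tb_class_def by auto

lemma tb_class_self: "x \<in> carrier G \<Longrightarrow> y \<in> carrier G \<Longrightarrow> (x, y) \<in> tb_class G R \<theta> x y"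
  unfolding tb_class_mem using subgroup.one_closed[OF subgroup_R] \<theta>_one by (intro bexI[of _ \<one>]) auto

lemma tb_class_subset:
  "x \<in> carrier G \<Longrightarrow> y \<in> carrier G \<Longrightarrow> tb_class G R \<theta> x y \<subseteq> carrier G \<times> carrier G"
  unfolding tb_class_def using R_closed \<theta>_closed by auto

lemma card_tb_class: "x \<in> carrier G \<Longrightarrow> card (tb_class G R \<theta> x y) = card R"
  unfolding tb_class_def by (rule card_image) (auto intro!: inj_onI dest: R_closed l_cancel[of x])

lemma tb_rel_step_in_class:
  assumes x: "x \<in> carrier G" and y: "y \<in> carrier G" and p: "p \<in> tb_class G R \<theta> x y"
    and step: "(p, p') \<in> tb_rel G R \<theta> \<union> (tb_rel G R \<theta>)\<inverse>"
  shows "p' \<in> tb_class G R \<theta> x y"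
proof -
  obtain r where r: "r \<in> R" and p_eq: "p = (x \<otimes> r, inv (\<theta> r) \<otimes> y)"
    using p unfolding tb_class_def by auto
  have rG: "r \<in> carrier G" and \<theta>r: "\<theta> r \<in> carrier G" using R_closed[OF r] \<theta>_closed[OF r] .
  from step obtain x' y' u where xyu: "x' \<in> carrier G" "y' \<in> carrier G" "u \<in> R"
    and cases: "(p = (x' \<otimes> u, y') \<and> p' = (x', \<theta> u \<otimes> y')) \<or>
                (p' = (x' \<otimes> u, y') \<and> p = (x', \<theta> u \<otimes> y'))"
    unfolding tb_rel_def by auto
  have uG: "u \<in> carrier G" and \<theta>u: "\<theta> u \<in> carrier G" using R_closed[OF xyu(3)] \<theta>_closed[OF xyu(3)] .
  from cases show ?thesis
  proof (elim disjE conjE)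
    assume p1: "p = (x' \<otimes> u, y')" and p': "p' = (x', \<theta> u \<otimes> y')"
    have e: "x' \<otimes> u = x \<otimes> r" using p1 p_eq by simp
    have "x' = (x' \<otimes> u) \<otimes> inv u" using xyu uG by (simp add: m_assoc)
    also have "\<dots> = x \<otimes> (r \<otimes> inv u)" unfolding e using x rG uG by (simp add: m_assoc)
    finally have "x' = x \<otimes> (r \<otimes> inv u)" .
    moreover have "\<theta> u \<otimes> y' = inv (\<theta> (r \<otimes> inv u)) \<otimes> y"
      using p1 p_eq y \<theta>r \<theta>u
      by (simp add: \<theta>_mult[OF r] \<theta>_inv subgroup.m_inv_closed[OF subgroup_R] xyu(3)
          inv_mult_group m_assoc)
    moreover have "r \<otimes> inv u \<in> R"
      using r xyu(3) subgroup.m_closed[OF subgroup_R] subgroup.m_inv_closed[OF subgroup_R] by blast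
    ultimately show ?thesis unfolding p' tb_class_mem by blast
  next
    assume p': "p' = (x' \<otimes> u, y')" and p1: "p = (x', \<theta> u \<otimes> y')"
    have "y' = inv (\<theta> u) \<otimes> (\<theta> u \<otimes> y')" using xyu \<theta>u by (simp add: m_assoc[symmetric])
    also have "\<dots> = inv (\<theta> (r \<otimes> u)) \<otimes> y"
      using p1 p_eq y \<theta>r \<theta>u by (simp add: \<theta>_mult[OF r xyu(3)] inv_mult_group m_assoc)
    finally have "y' = inv (\<theta> (r \<otimes> u)) \<otimes> y" .
    moreover have "x' \<otimes> u = x \<otimes> (r \<otimes> u)"
      using p1 p_eq x rG uG by (auto simp: m_assoc)
    moreover have "r \<otimes> u \<in> R" using r xyu(3) subgroup.m_closed[OF subgroup_R] by blast
    ultimately show ?thesis unfolding p' tb_class_mem by blast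
  qed
qed

lemma tb_equiv_class:
  assumes x: "x \<in> carrier G" and y: "y \<in> carrier G"
  shows "tb_equiv G R \<theta> `` {(x, y)} = tb_class G R \<theta> x y"
proof
  show "tb_equiv G R \<theta> `` {(x, y)} \<subseteq> tb_class G R \<theta> x y"
  proof
    fix p assume "p \<in> tb_equiv G R \<theta> `` {(x, y)}"
    then have "((x, y), p) \<in> (tb_rel G R \<theta> \<union> (tb_rel G R \<theta>)\<inverse>)\<^sup>*" unfolding tb_equiv_def by simp
    then show "p \<in> tb_class G R \<theta> x y"
      by (induction rule: rtrancl_induct) (auto intro: tb_rel_step_in_class[OF x y] tb_class_self[OF x y])
  qed
  show "tb_class G R \<theta> x y \<subseteq> tb_equiv G R \<theta> `` {(x, y)}"
  proof
    fix p assume "p \<in> tb_class G R \<theta> x y"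
    then obtain r where r: "r \<in> R" and p: "p = (x \<otimes> r, inv (\<theta> r) \<otimes> y)" unfolding tb_class_def by auto
    have "(p, (x, \<theta> r \<otimes> (inv (\<theta> r) \<otimes> y))) \<in> tb_rel G R \<theta>"
      unfolding tb_rel_def p using x y r \<theta>_closed[OF r] by auto
    moreover have "\<theta> r \<otimes> (inv (\<theta> r) \<otimes> y) = y" using \<theta>_closed[OF r] y by (simp add: m_assoc[symmetric])
    ultimately show "p \<in> tb_equiv G R \<theta> `` {(x, y)}" unfolding tb_equiv_def by auto
  qed
qed

lemma tb_carrier_eq: "tb_carrier G R \<theta> = (\<lambda>(x, y). tb_class G R \<theta> x y) ` (carrier G \<times> carrier G)"
proof -
  have "tb_carrier G R \<theta> = (\<lambda>p. tb_equiv G R \<theta> `` {p}) ` (carrier G \<times> carrier G)"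
    unfolding tb_carrier_quotient quotient_def by auto
  also have "\<dots> = (\<lambda>(x, y). tb_class G R \<theta> x y) ` (carrier G \<times> carrier G)"
  proof (rule image_cong)
    fix p assume "p \<in> carrier G \<times> carrier G"
    then show "tb_equiv G R \<theta> `` {p} = (\<lambda>(x, y). tb_class G R \<theta> x y) p"
      by (cases p) (simp add: tb_equiv_class)
  qed simp
  finally show ?thesis .
qed

lemma tb_carrierE:
  assumes "C \<in> tb_carrier G R \<theta>"
  obtains x y where "x \<in> carrier G" "y \<in> carrier G" "C = tb_class G R \<theta> x y"
  using assms unfolding tb_carrier_eq by auto

lemma tb_class_in_tb_carrier:
  "x \<in> carrier G \<Longrightarrow> y \<in> carrier G \<Longrightarrow> tb_class G R \<theta> x y \<in> tb_carrier G R \<theta>"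
  unfolding tb_carrier_eq by auto

lemma tb_class_eq:
  assumes x: "x \<in> carrier G" and y: "y \<in> carrier G" and x': "x' \<in> carrier G" and y': "y' \<in> carrier G"
  shows "tb_class G R \<theta> x' y' = tb_class G R \<theta> x y \<longleftrightarrow> (x', y') \<in> tb_class G R \<theta> x y"
proof
  assume "(x', y') \<in> tb_class G R \<theta> x y"
  then have "((x, y), (x', y')) \<in> tb_equiv G R \<theta>" using tb_equiv_class[OF x y] by blast
  then have "tb_equiv G R \<theta> `` {(x, y)} = tb_equiv G R \<theta> `` {(x', y')}"
    using equiv_class_eq[OF equiv_tb_equiv] by blast
  then show "tb_class G R \<theta> x' y' = tb_class G R \<theta> x y" using tb_equiv_class x y x' y' by simp
qed (use tb_class_self[OF x' y'] in blast)

lemma tb_carrier_subset: "C \<in> tb_carrier G R \<theta> \<Longrightarrow> C \<subseteq> carrier G \<times> carrier G"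
  by (elim tb_carrierE) (simp add: tb_class_subset)

lemma finite_tb_carrier: "finite (carrier G) \<Longrightarrow> finite (tb_carrier G R \<theta>)"
  unfolding tb_carrier_eq by simp

lemma tb_left_class:
  "s \<in> carrier G \<Longrightarrow> x \<in> carrier G \<Longrightarrow> tb_left G s (tb_class G R \<theta> x y) = tb_class G R \<theta> (s \<otimes> x) y"
  unfolding tb_left_def tb_class_def image_image using R_closed by (auto simp: m_assoc intro!: image_cong)

lemma tb_right_class:
  "t \<in> carrier G \<Longrightarrow> y \<in> carrier G \<Longrightarrow> tb_right G (tb_class G R \<theta> x y) t = tb_class G R \<theta> x (y \<otimes> t)"
  unfolding tb_right_def tb_class_def image_image using \<theta>_closed by (auto simp: m_assoc intro!: image_cong)

lemma tb_carrier_left_closed: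
  "C \<in> tb_carrier G R \<theta> \<Longrightarrow> s \<in> carrier G \<Longrightarrow> tb_left G s C \<in> tb_carrier G R \<theta>"
  by (elim tb_carrierE) (simp add: tb_left_class tb_class_in_tb_carrier)

lemma tb_carrier_right_closed:
  "C \<in> tb_carrier G R \<theta> \<Longrightarrow> t \<in> carrier G \<Longrightarrow> tb_right G C t \<in> tb_carrier G R \<theta>"
  by (elim tb_carrierE) (simp add: tb_right_class tb_class_in_tb_carrier)

lemma tb_carrier_transitive:
  assumes C: "C \<in> tb_carrier G R \<theta>" and D: "D \<in> tb_carrier G R \<theta>"
  shows "\<exists>s\<in>carrier G. \<exists>t\<in>carrier G. D = tb_left G s (tb_right G C t)"
proof -
  obtain x y where x: "x \<in> carrier G" and y: "y \<in> carrier G" and "C = tb_class G R \<theta> x y"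
    using C by (rule tb_carrierE)
  moreover obtain x' y' where x': "x' \<in> carrier G" and y': "y' \<in> carrier G"
    and "D = tb_class G R \<theta> x' y'" using D by (rule tb_carrierE)
  ultimately have "D = tb_left G (x' \<otimes> inv x) (tb_right G C (inv y \<otimes> y'))"
    by (simp add: tb_left_class tb_right_class m_assoc)
  then show ?thesis using x y x' y' by blast
qed

lemma tb_class_left_eq_right_iff:
  assumes x: "x \<in> carrier G" and y: "y \<in> carrier G" and u: "u \<in> carrier G" and t: "t \<in> carrier G"
  shows "tb_left G u (tb_class G R \<theta> x y) = tb_right G (tb_class G R \<theta> x y) t \<longleftrightarrow>
         inv x \<otimes> u \<otimes> x \<in> R \<and> \<theta> (inv x \<otimes> u \<otimes> x) = y \<otimes> t \<otimes> inv y"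
proof -
  have "tb_left G u (tb_class G R \<theta> x y) = tb_right G (tb_class G R \<theta> x y) t \<longleftrightarrow>
      (\<exists>r\<in>R. u \<otimes> x = x \<otimes> r \<and> y = inv (\<theta> r) \<otimes> (y \<otimes> t))"
    using tb_class_eq[of x "y \<otimes> t" "u \<otimes> x" y] assms
    by (simp add: tb_left_class tb_right_class tb_class_mem)
  also have "\<dots> \<longleftrightarrow> (\<exists>r\<in>R. r = inv x \<otimes> u \<otimes> x \<and> \<theta> r = y \<otimes> t \<otimes> inv y)"
  proof (intro bex_cong refl)
    fix r assume r: "r \<in> R"
    have "r = inv x \<otimes> (u \<otimes> x) \<longleftrightarrow> u \<otimes> x = x \<otimes> r"
      using x u R_closed[OF r] by (intro inv_solve_left) auto
    then have "u \<otimes> x = x \<otimes> r \<longleftrightarrow> r = inv x \<otimes> u \<otimes> x"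
      using x u by (auto simp: m_assoc)
    moreover have "y = inv (\<theta> r) \<otimes> (y \<otimes> t) \<longleftrightarrow> y \<otimes> t = \<theta> r \<otimes> y"
      using y t \<theta>_closed[OF r] by (intro inv_solve_left) auto
    moreover have "\<theta> r = y \<otimes> t \<otimes> inv y \<longleftrightarrow> y \<otimes> t = \<theta> r \<otimes> y"
      using y t \<theta>_closed[OF r] by (intro inv_solve_right) auto
    ultimately show "(u \<otimes> x = x \<otimes> r \<and> y = inv (\<theta> r) \<otimes> (y \<otimes> t)) \<longleftrightarrow>
        (r = inv x \<otimes> u \<otimes> x \<and> \<theta> r = y \<otimes> t \<otimes> inv y)" by simp
  qed
  finally show ?thesis by blast
qed

lemma tb_carrier_right_free:
  assumes C: "C \<in> tb_carrier G R \<theta>" and t: "t \<in> carrier G" and fixed: "tb_right G C t = C"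
  shows "t = \<one>"
proof -
  obtain x y where x: "x \<in> carrier G" and y: "y \<in> carrier G" and C_eq: "C = tb_class G R \<theta> x y"
    using C by (rule tb_carrierE)
  have "tb_left G \<one> C = C" using C_eq x by (simp add: tb_left_class)
  then have "\<theta> (inv x \<otimes> \<one> \<otimes> x) = y \<otimes> t \<otimes> inv y"
    using tb_class_left_eq_right_iff[OF x y one_closed t] fixed C_eq by simp
  then have "\<one> = y \<otimes> t \<otimes> inv y" using x \<theta>_one by simp
  then have "y \<otimes> t = y" using y t inv_solve_right[of \<one> "y \<otimes> t" y] by simp
  then show ?thesis using y t by simp
qed

lemma Union_tb_classes:
  assumes "\<C> \<subseteq> tb_carrier G R \<theta>"
  shows "\<Union>\<C> = {(x, y) \<in> carrier G \<times> carrier G. tb_class G R \<theta> x y \<in> \<C>}"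
proof
  show "\<Union>\<C> \<subseteq> {(x, y) \<in> carrier G \<times> carrier G. tb_class G R \<theta> x y \<in> \<C>}"
  proof
    fix p assume "p \<in> \<Union>\<C>"
    then obtain C where C: "C \<in> \<C>" "p \<in> C" by blast
    moreover from C(1) assms have "C \<in> tb_carrier G R \<theta>" ..
    ultimately obtain x y where xy: "x \<in> carrier G" "y \<in> carrier G" "C = tb_class G R \<theta> x y"
      by (blast elim: tb_carrierE)
    obtain a b where p: "p = (a, b)" by fastforce
    have ab: "a \<in> carrier G" "b \<in> carrier G" using tb_class_subset[OF xy(1,2)] C(2) xy(3) p by auto
    then have "tb_class G R \<theta> a b = C" using tb_class_eq[OF xy(1,2) ab] C(2) xy(3) p by simp
    then show "p \<in> {(x, y) \<in> carrier G \<times> carrier G. tb_class G R \<theta> x y \<in> \<C>}" using ab p C(1) by simp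
  qed
qed (auto intro: tb_class_self)

lemma card_Union_tb_classes:
  assumes fin: "finite (carrier G)" and sub: "\<C> \<subseteq> tb_carrier G R \<theta>"
  shows "card (\<Union>\<C>) = card \<C> * card R"
proof -
  have "card (\<Union>\<C>) = (\<Sum>C\<in>\<C>. card C)"
  proof (rule card_Union_disjoint)
    show "pairwise disjnt \<C>"
    proof (rule pairwiseI)
      fix C D assume "C \<in> \<C>" "D \<in> \<C>" "C \<noteq> D"
      then have "C \<inter> D = {}" using sub by (intro tb_carrier_disjoint[of C G R \<theta> D]) auto
      then show "disjnt C D" by (simp add: disjnt_def)
    qed
    show "finite C" if "C \<in> \<C>" for C
    proof (rule finite_subset)
      show "C \<subseteq> carrier G \<times> carrier G" using that sub by (intro tb_carrier_subset) blast
    qed (use fin in simp)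
  qed
  also have "\<dots> = (\<Sum>C\<in>\<C>. card R)"
    using sub by (intro sum.cong refl) (auto elim!: tb_carrierE simp: card_tb_class)
  finally show ?thesis by simp
qed

lemma card_fixed_tb_classes:
  assumes fin: "finite (carrier G)" and P: "P \<subseteq> carrier G" and \<chi>: "\<chi> ` P \<subseteq> carrier G"
  shows "card {C \<in> tb_carrier G R \<theta>. \<forall>u\<in>P. tb_left G u C = tb_right G C (\<chi> u)} * card R =
    card {(x, y) \<in> carrier G \<times> carrier G.
      \<forall>u\<in>P. inv x \<otimes> u \<otimes> x \<in> R \<and> \<theta> (inv x \<otimes> u \<otimes> x) = y \<otimes> \<chi> u \<otimes> inv y}"
proof -
  define Fix where "Fix = {C \<in> tb_carrier G R \<theta>. \<forall>u\<in>P. tb_left G u C = tb_right G C (\<chi> u)}"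
  have "card Fix * card R = card (\<Union>Fix)"
    using card_Union_tb_classes[OF fin] unfolding Fix_def by simp
  also have "\<Union>Fix = {(x, y) \<in> carrier G \<times> carrier G. tb_class G R \<theta> x y \<in> Fix}"
    by (rule Union_tb_classes) (auto simp: Fix_def)
  also have "\<dots> = {(x, y) \<in> carrier G \<times> carrier G.
      \<forall>u\<in>P. inv x \<otimes> u \<otimes> x \<in> R \<and> \<theta> (inv x \<otimes> u \<otimes> x) = y \<otimes> \<chi> u \<otimes> inv y}"
  proof -
    have "tb_class G R \<theta> x y \<in> Fix \<longleftrightarrow>
        (\<forall>u\<in>P. inv x \<otimes> u \<otimes> x \<in> R \<and> \<theta> (inv x \<otimes> u \<otimes> x) = y \<otimes> \<chi> u \<otimes> inv y)"
      if x: "x \<in> carrier G" and y: "y \<in> carrier G" for x y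
    proof -
      have "tb_class G R \<theta> x y \<in> Fix \<longleftrightarrow>
          (\<forall>u\<in>P. tb_left G u (tb_class G R \<theta> x y) = tb_right G (tb_class G R \<theta> x y) (\<chi> u))"
        using tb_class_in_tb_carrier[OF x y] unfolding Fix_def by simp
      also have "\<dots> \<longleftrightarrow> (\<forall>u\<in>P. inv x \<otimes> u \<otimes> x \<in> R \<and> \<theta> (inv x \<otimes> u \<otimes> x) = y \<otimes> \<chi> u \<otimes> inv y)"
      proof (rule ball_cong[OF refl])
        fix u assume "u \<in> P"
        then have "u \<in> carrier G" "\<chi> u \<in> carrier G" using P \<chi> by auto
        then show "tb_left G u (tb_class G R \<theta> x y) = tb_right G (tb_class G R \<theta> x y) (\<chi> u) \<longleftrightarrow>
            inv x \<otimes> u \<otimes> x \<in> R \<and> \<theta> (inv x \<otimes> u \<otimes> x) = y \<otimes> \<chi> u \<otimes> inv y"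
          by (rule tb_class_left_eq_right_iff[OF x y])
      qed
      finally show ?thesis .
    qed
    then show ?thesis by auto
  qed
  finally show ?thesis unfolding Fix_def .
qed

end

lemma (in group) subgroup_morphism_id: "subgroup Q G \<Longrightarrow> subgroup_morphism G Q (\<lambda>u. u)"
  by (intro subgroup_morphism.intro subgroup_morphism_axioms.intro is_group)
    (auto simp: hom_def dest: subgroup.mem_carrier)

context group
begin

lemma tb_class_subset_imp_extends:
  assumes T: "subgroup_morphism G R \<theta>" and T': "subgroup_morphism G R' \<theta>'"
    and x: "x \<in> carrier G" and y: "y \<in> carrier G"
    and sub: "tb_class G R \<theta> x y \<subseteq> tb_class G R' \<theta>' x y"
  shows "R \<subseteq> R'" and "\<forall>r\<in>R. \<theta> r = \<theta>' r"
proof -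
  have "r \<in> R' \<and> \<theta> r = \<theta>' r" if r: "r \<in> R" for r
  proof -
    have "(x \<otimes> r, inv (\<theta> r) \<otimes> y) \<in> tb_class G R' \<theta>' x y"
      using sub r unfolding tb_class_def by auto
    then obtain r' where r': "r' \<in> R'" "x \<otimes> r = x \<otimes> r'" "inv (\<theta> r) \<otimes> y = inv (\<theta>' r') \<otimes> y"
      unfolding subgroup_morphism.tb_class_mem[OF T'] by blast
    have rG: "r \<in> carrier G" "\<theta> r \<in> carrier G"
      using subgroup_morphism.R_closed[OF T r] subgroup_morphism.\<theta>_closed[OF T r] .
    have r'G: "r' \<in> carrier G" "\<theta>' r' \<in> carrier G"
      using subgroup_morphism.R_closed[OF T' r'(1)] subgroup_morphism.\<theta>_closed[OF T' r'(1)] .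
    have "r = r'" using r'(2) x rG r'G by simp
    moreover have "inv (\<theta> r) = inv (\<theta>' r')" using r'(3) y rG r'G by simp
    then have "\<theta> r = \<theta>' r'" using rG r'G inv_inj by (simp add: inj_on_eq_iff)
    ultimately show ?thesis using r'(1) by simp
  qed
  then show "R \<subseteq> R'" and "\<forall>r\<in>R. \<theta> r = \<theta>' r" by auto
qed

lemma tb_carrier_determines_morphism:
  assumes T: "subgroup_morphism G R \<theta>" and T': "subgroup_morphism G R' \<theta>'"
    and ext: "\<theta> \<in> extensional R" "\<theta>' \<in> extensional R'"
    and C: "C \<in> tb_carrier G R \<theta>" and C': "C \<in> tb_carrier G R' \<theta>'"
  shows "R = R' \<and> \<theta> = \<theta>'"
proof -
  obtain x y where x: "x \<in> carrier G" and y: "y \<in> carrier G" and C_eq: "C = tb_class G R \<theta> x y"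
    using C by (rule subgroup_morphism.tb_carrierE[OF T])
  obtain x' y' where x': "x' \<in> carrier G" and y': "y' \<in> carrier G" and C'_eq: "C = tb_class G R' \<theta>' x' y'"
    using C' by (rule subgroup_morphism.tb_carrierE[OF T'])
  have "(x, y) \<in> C" using subgroup_morphism.tb_class_self[OF T x y] C_eq by simp
  then have eq: "tb_class G R \<theta> x y = tb_class G R' \<theta>' x y"
    using subgroup_morphism.tb_class_eq[OF T' x' y' x y] C_eq C'_eq by simp
  have "R = R'"
    using tb_class_subset_imp_extends(1)[OF T T' x y] tb_class_subset_imp_extends(1)[OF T' T x y] eq
    by blast
  moreover have "\<theta> = \<theta>'"
    using tb_class_subset_imp_extends(2)[OF T T' x y] eq ext \<open>R = R'\<close>
    by (intro extensionalityI[of _ R]) auto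
  ultimately show ?thesis ..
qed

end

section \<open>Consequences of the fusion system axioms\<close>

context group
begin

lemma conjugate_cancel [simp]:
  "x \<in> carrier G \<Longrightarrow> u \<in> carrier G \<Longrightarrow> x \<otimes> (inv x \<otimes> u \<otimes> x) \<otimes> inv x = u"
  "x \<in> carrier G \<Longrightarrow> u \<in> carrier G \<Longrightarrow> inv x \<otimes> (x \<otimes> u \<otimes> inv x) \<otimes> x = u"
  by (simp_all add: m_assoc)

lemma card_conjugate:
  assumes P: "P \<subseteq> carrier G" and x: "x \<in> carrier G"
  shows "card ((\<lambda>u. inv x \<otimes> u \<otimes> x) ` P) = card P"
proof (rule card_image)
  show "inj_on (\<lambda>u. inv x \<otimes> u \<otimes> x) P"
    using P x by (intro inj_onI) (simp add: m_assoc subset_iff)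
qed

lemma conjugate_condition_iff:
  assumes P: "P \<subseteq> carrier G" and x: "x \<in> carrier G"
  shows "(\<forall>u\<in>P. inv x \<otimes> u \<otimes> x \<in> R \<and> \<theta> (inv x \<otimes> u \<otimes> x) = y \<otimes> \<chi> u \<otimes> inv y) \<longleftrightarrow>
    (\<lambda>u. inv x \<otimes> u \<otimes> x) ` P \<subseteq> R \<and>
    restrict \<theta> ((\<lambda>u. inv x \<otimes> u \<otimes> x) ` P) =
      restrict (\<lambda>v. y \<otimes> \<chi> (x \<otimes> v \<otimes> inv x) \<otimes> inv y) ((\<lambda>u. inv x \<otimes> u \<otimes> x) ` P)"
  using P x by (auto simp: restrict_def fun_eq_iff subset_iff)

context
  fixes F :: "'a set \<Rightarrow> 'a set \<Rightarrow> ('a \<Rightarrow> 'a) set"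
  assumes fusion: "fusion_system G F"
begin

lemma fusion_subgroups: "\<phi> \<in> F P Q \<Longrightarrow> subgroup P G \<and> subgroup Q G"
  using fusion unfolding fusion_system_def by blast

lemma fusion_morphism:
  "\<phi> \<in> F P Q \<Longrightarrow> \<phi> \<in> extensional P \<and> \<phi> \<in> hom (G\<lparr>carrier := P\<rparr>) G \<and> \<phi> ` P \<subseteq> Q \<and> inj_on \<phi> P"
  using fusion unfolding fusion_system_def by blast

lemma fusion_conjugation:
  "subgroup P G \<Longrightarrow> subgroup Q G \<Longrightarrow> s \<in> carrier G \<Longrightarrow> (\<lambda>u. s \<otimes> u \<otimes> inv s) ` P \<subseteq> Q \<Longrightarrow>
    restrict (\<lambda>u. s \<otimes> u \<otimes> inv s) P \<in> F P Q"
  using fusion unfolding fusion_system_def by blast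

lemma fusion_iso: "\<phi> \<in> F P Q \<Longrightarrow> \<phi> \<in> F P (\<phi> ` P) \<and> restrict (inv_into P \<phi>) (\<phi> ` P) \<in> F (\<phi> ` P) P"
  using fusion unfolding fusion_system_def by blast

lemma fusion_comp: "\<phi> \<in> F P Q \<Longrightarrow> \<psi> \<in> F Q R \<Longrightarrow> restrict (\<psi> \<circ> \<phi>) P \<in> F P R"
  using fusion unfolding fusion_system_def by blast

lemma fusion_subgroup_morphism: "\<theta> \<in> F R (carrier G) \<Longrightarrow> subgroup_morphism G R \<theta>"
  using fusion_subgroups fusion_morphism by (intro subgroup_morphism.intro subgroup_morphism_axioms.intro is_group) blast+

lemma fusion_restrict:
  assumes \<theta>: "\<theta> \<in> F R (carrier G)" and P: "subgroup P G" and PR: "P \<subseteq> R"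
  shows "restrict \<theta> P \<in> F P (carrier G)"
proof -
  have R: "subgroup R G" using fusion_subgroups[OF \<theta>] by blast
  have PG: "P \<subseteq> carrier G" using subgroup.subset[OF P] .
  have "restrict (\<lambda>u. \<one> \<otimes> u \<otimes> inv \<one>) P \<in> F P R"
    using PG PR by (intro fusion_conjugation[OF P R one_closed]) (auto simp: subset_iff)
  from fusion_comp[OF this \<theta>] show ?thesis
    using PG by (simp add: restrict_def o_def subset_iff cong: if_cong)
qed

lemma fusion_subgroup_conjugate:
  assumes P: "subgroup P G" and x: "x \<in> carrier G"
  shows "subgroup ((\<lambda>u. inv x \<otimes> u \<otimes> x) ` P) G"
proof -
  define c where "c = restrict (\<lambda>u. inv x \<otimes> u \<otimes> inv (inv x)) P"
  have "c \<in> F P (carrier G)"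
    unfolding c_def using x subgroup.subset[OF P] by (intro fusion_conjugation[OF P subgroup_self]) auto
  then have "subgroup (c ` P) G" using fusion_iso fusion_subgroups by blast
  moreover have "c ` P = (\<lambda>u. inv x \<otimes> u \<otimes> x) ` P" unfolding c_def using x by auto
  ultimately show ?thesis by simp
qed

lemma fusion_conjugate_twist:
  assumes \<chi>: "restrict \<chi> P \<in> F P (carrier G)" and x: "x \<in> carrier G" and y: "y \<in> carrier G"
  shows "restrict (\<lambda>v. y \<otimes> \<chi> (x \<otimes> v \<otimes> inv x) \<otimes> inv y) ((\<lambda>u. inv x \<otimes> u \<otimes> x) ` P)
           \<in> F ((\<lambda>u. inv x \<otimes> u \<otimes> x) ` P) (carrier G)"
proof -
  define P' where "P' = (\<lambda>u. inv x \<otimes> u \<otimes> x) ` P"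
  have P: "subgroup P G" using fusion_subgroups[OF \<chi>] by blast
  have PG: "P \<subseteq> carrier G" using subgroup.subset[OF P] .
  have P': "subgroup P' G" unfolding P'_def by (rule fusion_subgroup_conjugate[OF P x])
  have undo: "x \<otimes> v \<otimes> inv x \<in> P" if "v \<in> P'" for v
    using that PG x unfolding P'_def by (auto simp: subset_iff)
  have "restrict (\<lambda>v. x \<otimes> v \<otimes> inv x) P' \<in> F P' P"
    using undo by (intro fusion_conjugation[OF P' P x]) auto
  from fusion_comp[OF this \<chi>]
  have c: "restrict (restrict \<chi> P \<circ> restrict (\<lambda>v. x \<otimes> v \<otimes> inv x) P') P' \<in> F P' (carrier G)" .
  have "restrict (\<lambda>w. y \<otimes> w \<otimes> inv y) (carrier G) \<in> F (carrier G) (carrier G)"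
    using y by (intro fusion_conjugation[OF subgroup_self subgroup_self]) auto
  from fusion_comp[OF c this]
  have "restrict (restrict (\<lambda>w. y \<otimes> w \<otimes> inv y) (carrier G) \<circ>
      restrict (restrict \<chi> P \<circ> restrict (\<lambda>v. x \<otimes> v \<otimes> inv x) P') P') P' \<in> F P' (carrier G)"
    (is "restrict ?h P' \<in> _") .
  moreover have "restrict ?h P' = restrict (\<lambda>v. y \<otimes> \<chi> (x \<otimes> v \<otimes> inv x) \<otimes> inv y) P'"
  proof (rule restrict_ext)
    fix v assume v: "v \<in> P'"
    have "\<chi> (x \<otimes> v \<otimes> inv x) \<in> carrier G"
      using undo[OF v] fusion_morphism[OF \<chi>] by (auto simp: hom_def)
    then show "?h v = y \<otimes> \<chi> (x \<otimes> v \<otimes> inv x) \<otimes> inv y" using v undo[OF v] by simp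
  qed
  ultimately show ?thesis unfolding P'_def by simp
qed

lemma fusion_conjugate_twist_iff:
  assumes P: "subgroup P G" and \<chi>: "\<chi> ` P \<subseteq> carrier G" and x: "x \<in> carrier G" and y: "y \<in> carrier G"
  shows "restrict (\<lambda>v. y \<otimes> \<chi> (x \<otimes> v \<otimes> inv x) \<otimes> inv y) ((\<lambda>u. inv x \<otimes> u \<otimes> x) ` P)
           \<in> F ((\<lambda>u. inv x \<otimes> u \<otimes> x) ` P) (carrier G) \<longleftrightarrow> restrict \<chi> P \<in> F P (carrier G)"
proof
  define P' where "P' = (\<lambda>u. inv x \<otimes> u \<otimes> x) ` P"
  define \<psi> where "\<psi> = (\<lambda>v. y \<otimes> \<chi> (x \<otimes> v \<otimes> inv x) \<otimes> inv y)"
  have PG: "P \<subseteq> carrier G" using subgroup.subset[OF P] .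
  assume "restrict \<psi> P' \<in> F P' (carrier G)"
  from fusion_conjugate_twist[OF this inv_closed[OF x] inv_closed[OF y]]
  have "restrict (\<lambda>w. inv y \<otimes> \<psi> (inv x \<otimes> w \<otimes> x) \<otimes> y) ((\<lambda>v. x \<otimes> v \<otimes> inv x) ` P')
      \<in> F ((\<lambda>v. x \<otimes> v \<otimes> inv x) ` P') (carrier G)" using x y by simp
  moreover have "(\<lambda>v. x \<otimes> v \<otimes> inv x) ` P' = P"
  proof -
    have "(\<lambda>v. x \<otimes> v \<otimes> inv x) ` P' = (\<lambda>u. u) ` P"
      unfolding P'_def image_image by (rule image_cong) (use PG x in auto)
    then show ?thesis by simp
  qed
  moreover have "restrict (\<lambda>w. inv y \<otimes> \<psi> (inv x \<otimes> w \<otimes> x) \<otimes> y) P = restrict \<chi> P"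
  proof (rule restrict_ext)
    fix w assume w: "w \<in> P"
    then have "w \<in> carrier G" "\<chi> w \<in> carrier G" using PG \<chi> by auto
    then show "inv y \<otimes> \<psi> (inv x \<otimes> w \<otimes> x) \<otimes> y = \<chi> w" unfolding \<psi>_def using x y by simp
  qed
  ultimately show "restrict \<chi> P \<in> F P (carrier G)" by simp
qed (rule fusion_conjugate_twist[OF _ x y])

lemma fusion_image_subgroup:
  assumes \<phi>: "\<phi> \<in> F Q (carrier G)" and P: "subgroup P G" and PQ: "P \<subseteq> Q"
  shows "subgroup (\<phi> ` P) G" and "card (\<phi> ` P) = card P"
proof -
  have "restrict \<phi> P \<in> F P (restrict \<phi> P ` P)"
    using fusion_iso[OF fusion_restrict[OF \<phi> P PQ]] by blast
  then show "subgroup (\<phi> ` P) G" using fusion_subgroups by fastforce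
  show "card (\<phi> ` P) = card P"
    using fusion_morphism[OF \<phi>] PQ by (meson card_image inj_on_subset)
qed

lemma fusion_twist_iff:
  assumes \<phi>: "\<phi> \<in> F Q (carrier G)" and P: "subgroup P G" and PQ: "P \<subseteq> Q"
  shows "restrict \<chi> P \<in> F P (carrier G) \<longleftrightarrow>
    restrict (\<chi> \<circ> inv_into P \<phi>) (\<phi> ` P) \<in> F (\<phi> ` P) (carrier G)"
proof -
  define \<phi>P where "\<phi>P = restrict \<phi> P"
  have inj: "inj_on \<phi> P" using fusion_morphism[OF \<phi>] PQ inj_on_subset by blast
  have \<phi>P: "\<phi>P \<in> F P (carrier G)" unfolding \<phi>P_def by (rule fusion_restrict[OF \<phi> P PQ])
  have "inv_into P \<phi>P = inv_into P \<phi>"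
    unfolding inv_into_def \<phi>P_def by (rule ext, rule arg_cong[where f = Eps]) auto
  then have fwd: "\<phi>P \<in> F P (\<phi> ` P)" and bwd: "restrict (inv_into P \<phi>) (\<phi> ` P) \<in> F (\<phi> ` P) P"
    using fusion_iso[OF \<phi>P] unfolding \<phi>P_def by simp_all
  show ?thesis
  proof
    assume "restrict \<chi> P \<in> F P (carrier G)"
    from fusion_comp[OF bwd this]
    show "restrict (\<chi> \<circ> inv_into P \<phi>) (\<phi> ` P) \<in> F (\<phi> ` P) (carrier G)"
      by (simp add: restrict_def o_def inv_into_into cong: if_cong)
  next
    assume "restrict (\<chi> \<circ> inv_into P \<phi>) (\<phi> ` P) \<in> F (\<phi> ` P) (carrier G)"
    from fusion_comp[OF fwd this] show "restrict \<chi> P \<in> F P (carrier G)"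
      by (simp add: restrict_def o_def \<phi>P_def inv_into_f_f[OF inj] cong: if_cong)
  qed
qed

end

end

section \<open>Weights constant on levels\<close>

text \<open>The weights are fixed level by level from the top; on the lowest level only finitely many
  values have to be absorbed by one constant.\<close>

lemma level_weights_add_lowest_level:
  fixes size :: "'v \<Rightarrow> nat" and k :: "'v \<Rightarrow> nat" and c :: "nat \<Rightarrow> nat"
  assumes V: "finite V" and low: "\<forall>v\<in>V. b \<le> size v" and E: "\<forall>v\<in>V. E v \<subseteq> {v \<in> V. b < size v}"
    and c_pos: "\<forall>m. 0 < c m" and k: "\<forall>v\<in>{v \<in> V. b < size v}. k v + (\<Sum>w\<in>E v. k w) = c (size v)"
  shows "\<exists>(k' :: 'v \<Rightarrow> nat) (c' :: nat \<Rightarrow> nat).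
    (\<forall>m. 0 < c' m) \<and> (\<forall>v\<in>V. k' v + (\<Sum>w\<in>E v. k' w) = c' (size v))"
proof -
  define c' where "c' m = (if m = b then 1 + (\<Sum>v\<in>{v \<in> V. size v = b}. \<Sum>w\<in>E v. k w) else c m)"
    for m
  define k' where "k' v = (if v \<in> V \<and> size v = b then c' b - (\<Sum>w\<in>E v. k w) else k v)" for v
  have k'_E: "(\<Sum>w\<in>E v. k' w) = (\<Sum>w\<in>E v. k w)" if "v \<in> V" for v
    using E that unfolding k'_def by (intro sum.cong) auto
  have "k' v + (\<Sum>w\<in>E v. k' w) = c' (size v)" if v: "v \<in> V" for v
  proof (cases "size v = b")
    case True
    have "(\<Sum>w\<in>E v. k w) \<le> (\<Sum>v\<in>{v \<in> V. size v = b}. \<Sum>w\<in>E v. k w)"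
      using v True V by (intro member_le_sum) auto
    then show ?thesis using True v k'_E[OF v] unfolding k'_def c'_def by simp
  next
    case False
    then have "b < size v" using low v by (simp add: order_less_le)
    then show ?thesis using False v k k'_E[OF v] unfolding k'_def c'_def by simp
  qed
  moreover have "\<forall>m. 0 < c' m" using c_pos unfolding c'_def by simp
  ultimately show ?thesis by blast
qed

lemma exists_level_weights:
  fixes size :: "'v \<Rightarrow> nat" and E :: "'v \<Rightarrow> 'v set"
  assumes "finite V" and "\<And>v. v \<in> V \<Longrightarrow> E v \<subseteq> V"
    and "\<And>v w. v \<in> V \<Longrightarrow> w \<in> E v \<Longrightarrow> size v < size w"
  shows "\<exists>(k :: 'v \<Rightarrow> nat) (c :: nat \<Rightarrow> nat). (\<forall>m. 0 < c m) \<and> (\<forall>v\<in>V. k v + (\<Sum>w\<in>E v. k w) = c (size v))"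
  using assms
proof (induction "card V" arbitrary: V rule: less_induct)
  case less
  show ?case
  proof (cases "V = {}")
    case True
    show ?thesis by (rule exI[of _ "\<lambda>_. 0"], rule exI[of _ "\<lambda>_. 1"]) (simp add: True)
  next
    case False
    define m0 where "m0 = Min (size ` V)"
    have low: "\<forall>v\<in>V. m0 \<le> size v" unfolding m0_def using less.prems(1) by simp
    have "m0 \<in> size ` V" unfolding m0_def using False less.prems(1) by simp
    then have "card {v \<in> V. m0 < size v} < card V"
      using less.prems(1) by (intro psubset_card_mono) auto
    moreover have E: "\<forall>v\<in>V. E v \<subseteq> {v \<in> V. m0 < size v}"
      using less.prems(2,3) low by (fastforce dest: le_less_trans)
    ultimately have "\<exists>(k :: 'v \<Rightarrow> nat) (c :: nat \<Rightarrow> nat).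
        (\<forall>m. 0 < c m) \<and> (\<forall>v\<in>{v \<in> V. m0 < size v}. k v + (\<Sum>w\<in>E v. k w) = c (size v))"
      using less.prems(1,3) by (intro less.hyps) auto
    then obtain k :: "'v \<Rightarrow> nat" and c :: "nat \<Rightarrow> nat" where "\<forall>m. 0 < c m"
      and "\<forall>v\<in>{v \<in> V. m0 < size v}. k v + (\<Sum>w\<in>E v. k w) = c (size v)" by blast
    then show ?thesis
      by (rule level_weights_add_lowest_level[OF less.prems(1) low E])
  qed
qed

section \<open>Disjoint unions of transitive bisets\<close>

definition copies_biset :: "('a, 'm) monoid_scheme \<Rightarrow> ('a set \<times> ('a \<Rightarrow> 'a)) set \<Rightarrow>
    ('a set \<times> ('a \<Rightarrow> 'a) \<Rightarrow> nat) \<Rightarrow> (('a \<times> 'a) set \<times> nat) set" where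
  "copies_biset G V n = (\<Union>q\<in>V. tb_carrier G (fst q) (snd q) \<times> {..< n q})"

definition copies_left :: "('a, 'm) monoid_scheme \<Rightarrow> 'a \<Rightarrow> ('a \<times> 'a) set \<times> nat \<Rightarrow> ('a \<times> 'a) set \<times> nat" where
  "copies_left G s z = (tb_left G s (fst z), snd z)"

definition copies_right :: "('a, 'm) monoid_scheme \<Rightarrow> ('a \<times> 'a) set \<times> nat \<Rightarrow> 'a \<Rightarrow> ('a \<times> 'a) set \<times> nat" where
  "copies_right G z t = (tb_right G (fst z) t, snd z)"

lemma biset_iso_copy:
  "biset_iso L R (C \<times> {i}) (copies_left G) (copies_right G) C (tb_left G) (tb_right G)"
  unfolding biset_iso_def copies_left_def copies_right_def
  by (intro exI[of _ fst] conjI ballI) (auto simp: bij_betw_def inj_on_def)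

lemma copies_biset_mem:
  "z \<in> copies_biset G V n \<longleftrightarrow> (\<exists>q\<in>V. fst z \<in> tb_carrier G (fst q) (snd q) \<and> snd z < n q)"
  unfolding copies_biset_def by (cases z) auto

locale biset_of_copies = group G for G (structure) +
  fixes V :: "('a set \<times> ('a \<Rightarrow> 'a)) set"
  assumes V_subgroup_morphism: "q \<in> V \<Longrightarrow> subgroup_morphism G (fst q) (snd q)"
    and V_extensional: "q \<in> V \<Longrightarrow> snd q \<in> extensional (fst q)"
begin

lemma copies_biset_cases:
  assumes "z \<in> copies_biset G V n"
  obtains q where "q \<in> V" "fst z \<in> tb_carrier G (fst q) (snd q)" "snd z < n q"
    "fst z \<subseteq> carrier G \<times> carrier G"
proof -
  from assms obtain q where q: "q \<in> V" "fst z \<in> tb_carrier G (fst q) (snd q)" "snd z < n q"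
    unfolding copies_biset_mem by blast
  moreover have "fst z \<subseteq> carrier G \<times> carrier G"
    using subgroup_morphism.tb_carrier_subset[OF V_subgroup_morphism[OF q(1)] q(2)] .
  ultimately show ?thesis by (rule that)
qed

lemma biset_copies_biset: "biset G (copies_biset G V n) (copies_left G) (copies_right G)"
  unfolding biset_def
proof (intro conjI ballI)
  fix z s assume z: "z \<in> copies_biset G V n" and s: "s \<in> carrier G"
  from z obtain q where q: "q \<in> V" "fst z \<in> tb_carrier G (fst q) (snd q)" "snd z < n q"
    by (rule copies_biset_cases)
  have "tb_left G s (fst z) \<in> tb_carrier G (fst q) (snd q)"
    "tb_right G (fst z) s \<in> tb_carrier G (fst q) (snd q)"
    using subgroup_morphism.tb_carrier_left_closed[OF V_subgroup_morphism[OF q(1)] q(2) s]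
      subgroup_morphism.tb_carrier_right_closed[OF V_subgroup_morphism[OF q(1)] q(2) s] .
  then show "copies_left G s z \<in> copies_biset G V n" "copies_right G z s \<in> copies_biset G V n"
    using q unfolding copies_biset_mem copies_left_def copies_right_def by auto
next
  fix z assume "z \<in> copies_biset G V n"
  then have "fst z \<subseteq> carrier G \<times> carrier G" by (rule copies_biset_cases)
  then show "copies_left G \<one> z = z" "copies_right G z \<one> = z"
    unfolding copies_left_def copies_right_def by (simp_all add: tb_left_one tb_right_one)
next
  fix z s t assume "z \<in> copies_biset G V n" "s \<in> carrier G" "t \<in> carrier G"
  moreover from this(1) have "fst z \<subseteq> carrier G \<times> carrier G" by (rule copies_biset_cases)
  ultimately show "copies_left G s (copies_left G t z) = copies_left G (s \<otimes> t) z"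
    "copies_right G (copies_right G z s) t = copies_right G z (s \<otimes> t)"
    "copies_left G s (copies_right G z t) = copies_right G (copies_left G s z) t"
    unfolding copies_left_def copies_right_def
    by (simp_all add: tb_left_mult tb_right_mult tb_left_right_commute)
qed

lemma finite_copies_biset:
  assumes "finite (carrier G)" and "finite V"
  shows "finite (copies_biset G V n)"
  unfolding copies_biset_def
  using assms subgroup_morphism.finite_tb_carrier[OF V_subgroup_morphism] by blast

lemma copies_right_free:
  assumes z: "z \<in> copies_biset G V n" and t: "t \<in> carrier G" and fixed: "copies_right G z t = z"
  shows "t = \<one>"
proof -
  obtain q where q: "q \<in> V" "fst z \<in> tb_carrier G (fst q) (snd q)" using z by (rule copies_biset_cases)
  have "tb_right G (fst z) t = fst z" using fixed unfolding copies_right_def by (simp add: prod_eq_iff)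
  then show ?thesis
    by (rule subgroup_morphism.tb_carrier_right_free[OF V_subgroup_morphism[OF q(1)] q(2) t])
qed

lemma transitive_subbiset_copies_biset:
  assumes Y: "transitive_subbiset G (copies_biset G V n) (copies_left G) (copies_right G) Y"
  shows "\<exists>q\<in>V. biset_iso (carrier G) (carrier G) Y (copies_left G) (copies_right G)
           (tb_carrier G (fst q) (snd q)) (tb_left G) (tb_right G)"
proof -
  have sub: "Y \<subseteq> copies_biset G V n" and closed: "\<forall>y\<in>Y. \<forall>s\<in>carrier G. copies_left G s y \<in> Y \<and> copies_right G y s \<in> Y"
    and trans: "\<forall>y\<in>Y. \<forall>z\<in>Y. \<exists>s\<in>carrier G. \<exists>t\<in>carrier G. z = copies_left G s (copies_right G y t)"
    and "Y \<noteq> {}" using Y unfolding transitive_subbiset_def subbiset_def by auto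
  then obtain y0 where y0: "y0 \<in> Y" by blast
  then obtain q where q: "q \<in> V" "fst y0 \<in> tb_carrier G (fst q) (snd q)"
    using sub by (blast elim: copies_biset_cases)
  interpret T: subgroup_morphism G "fst q" "snd q" by (rule V_subgroup_morphism[OF q(1)])
  have "Y = tb_carrier G (fst q) (snd q) \<times> {snd y0}"
  proof (intro equalityI subsetI)
    fix z assume "z \<in> Y"
    then obtain s t where "s \<in> carrier G" "t \<in> carrier G" "z = copies_left G s (copies_right G y0 t)"
      using trans y0 by blast
    then show "z \<in> tb_carrier G (fst q) (snd q) \<times> {snd y0}"
      using q(2) T.tb_carrier_left_closed T.tb_carrier_right_closed
      unfolding copies_left_def copies_right_def by (simp add: mem_Times_iff)
  next
    fix z assume "z \<in> tb_carrier G (fst q) (snd q) \<times> {snd y0}"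
    then have z1: "fst z \<in> tb_carrier G (fst q) (snd q)" and z2: "snd z = snd y0"
      by (auto simp: mem_Times_iff)
    obtain s t where st: "s \<in> carrier G" "t \<in> carrier G"
      and "fst z = tb_left G s (tb_right G (fst y0) t)"
      using T.tb_carrier_transitive[OF q(2) z1] by blast
    with z2 have "z = copies_left G s (copies_right G y0 t)"
      unfolding copies_left_def copies_right_def by (simp add: prod_eq_iff)
    then show "z \<in> Y" using closed y0 st by blast
  qed
  with q(1) biset_iso_copy show ?thesis by metis
qed

lemma card_fixed_points_copies_biset:
  assumes fin: "finite (carrier G)" and finV: "finite V"
  shows "card {z \<in> copies_biset G V n. \<forall>u\<in>P. copies_left G u z = copies_right G z (\<chi> u)} =
    (\<Sum>q\<in>V. n q * card {C \<in> tb_carrier G (fst q) (snd q). \<forall>u\<in>P. tb_left G u C = tb_right G C (\<chi> u)})"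
proof -
  define Fix where "Fix q = {C \<in> tb_carrier G (fst q) (snd q). \<forall>u\<in>P. tb_left G u C = tb_right G C (\<chi> u)}"
    for q
  have "{z \<in> copies_biset G V n. \<forall>u\<in>P. copies_left G u z = copies_right G z (\<chi> u)} =
      (\<Union>q\<in>V. Fix q \<times> {..< n q})"
    unfolding Fix_def copies_biset_def copies_left_def copies_right_def by (auto simp: prod_eq_iff)
  also have "card \<dots> = (\<Sum>q\<in>V. card (Fix q \<times> {..< n q}))"
  proof (rule card_UN_disjoint[OF finV])
    show "\<forall>q\<in>V. finite (Fix q \<times> {..< n q})"
      using subgroup_morphism.finite_tb_carrier[OF V_subgroup_morphism fin] unfolding Fix_def by simp
    show "\<forall>q\<in>V. \<forall>q'\<in>V. q \<noteq> q' \<longrightarrow> (Fix q \<times> {..< n q}) \<inter> (Fix q' \<times> {..< n q'}) = {}"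
    proof (intro ballI impI)
      fix q q' assume q: "q \<in> V" and q': "q' \<in> V" and "q \<noteq> q'"
      have "C \<notin> Fix q'" if "C \<in> Fix q" for C
        using that tb_carrier_determines_morphism[OF V_subgroup_morphism[OF q] V_subgroup_morphism[OF q']]
          V_extensional q q' \<open>q \<noteq> q'\<close> unfolding Fix_def by (auto simp: prod_eq_iff)
      then show "(Fix q \<times> {..< n q}) \<inter> (Fix q' \<times> {..< n q'}) = {}" by blast
    qed
  qed
  finally show ?thesis unfolding Fix_def by (simp add: card_cartesian_product mult.commute)
qed

lemma subbiset_copy:
  assumes q: "q \<in> V" and i: "i < n q"
  shows "subbiset G (copies_biset G V n) (copies_left G) (copies_right G) (tb_carrier G (fst q) (snd q) \<times> {i})"
  unfolding subbiset_def copies_left_def copies_right_def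
  using q i subgroup_morphism.tb_carrier_left_closed[OF V_subgroup_morphism[OF q]]
    subgroup_morphism.tb_carrier_right_closed[OF V_subgroup_morphism[OF q]]
  by (auto simp: copies_biset_def)

end

section \<open>Twisted actions of \<open>Q \<times> S\<close> on a biset\<close>

text \<open>The \<open>Q \<times> S\<close>-set of the \<open>Q\<close>-\<open>S\<close>-biset obtained by restricting the left action along \<open>\<rho>\<close>;
  its equivariant bijections are the biset isomorphisms.\<close>

definition twisted_action :: "('a, 'm) monoid_scheme \<Rightarrow> ('a \<Rightarrow> 'b \<Rightarrow> 'b) \<Rightarrow> ('b \<Rightarrow> 'a \<Rightarrow> 'b) \<Rightarrow>
    ('a \<Rightarrow> 'a) \<Rightarrow> 'a \<times> 'a \<Rightarrow> 'b \<Rightarrow> 'b" where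
  "twisted_action G l r \<rho> g z = l (\<rho> (fst g)) (r z (inv\<^bsub>G\<^esub> (snd g)))"

context group
begin

lemma biset_left_closed: "biset G B l r \<Longrightarrow> x \<in> B \<Longrightarrow> s \<in> carrier G \<Longrightarrow> l s x \<in> B"
  and biset_right_closed: "biset G B l r \<Longrightarrow> x \<in> B \<Longrightarrow> s \<in> carrier G \<Longrightarrow> r x s \<in> B"
  and biset_left_one: "biset G B l r \<Longrightarrow> x \<in> B \<Longrightarrow> l \<one> x = x"
  and biset_right_one: "biset G B l r \<Longrightarrow> x \<in> B \<Longrightarrow> r x \<one> = x"
  and biset_left_mult: "biset G B l r \<Longrightarrow> x \<in> B \<Longrightarrow> s \<in> carrier G \<Longrightarrow> t \<in> carrier G \<Longrightarrow>
    l s (l t x) = l (s \<otimes> t) x"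
  and biset_right_mult: "biset G B l r \<Longrightarrow> x \<in> B \<Longrightarrow> s \<in> carrier G \<Longrightarrow> t \<in> carrier G \<Longrightarrow>
    r (r x s) t = r x (s \<otimes> t)"
  and biset_left_right: "biset G B l r \<Longrightarrow> x \<in> B \<Longrightarrow> s \<in> carrier G \<Longrightarrow> t \<in> carrier G \<Longrightarrow>
    l s (r x t) = r (l s x) t"
  unfolding biset_def by blast+

lemma biset_right_cancel:
  assumes B: "biset G B l r" and x: "x \<in> B" and t: "t \<in> carrier G"
  shows "r (r x t) (inv t) = x" and "r (r x (inv t)) t = x"
  using biset_right_mult[OF B x] biset_right_one[OF B x] t by simp_all

lemma biset_fixed_iff:
  assumes B: "biset G B l r" and x: "x \<in> B" and u: "u \<in> carrier G" and t: "t \<in> carrier G"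
  shows "l u (r x (inv t)) = x \<longleftrightarrow> l u x = r x t"
proof
  assume "l u (r x (inv t)) = x"
  then have "r (r (l u x) (inv t)) t = r x t" using biset_left_right[OF B x u] t by simp
  then show "l u x = r x t" using biset_right_cancel(2)[OF B biset_left_closed[OF B x u] t] by simp
next
  assume "l u x = r x t"
  then show "l u (r x (inv t)) = x"
    using biset_left_right[OF B x u] biset_right_cancel(1)[OF B x t] t by simp
qed

lemma biset_left_eq_right_mult:
  assumes B: "biset G B l r" and z: "z \<in> B" and s: "s \<in> carrier G" and s': "s' \<in> carrier G"
    and t: "t \<in> carrier G" and t': "t' \<in> carrier G" and "l s z = r z t" and "l s' z = r z t'"
  shows "l (s \<otimes> s') z = r z (t \<otimes> t')"
  using assms biset_left_mult[OF B z s s'] biset_left_right[OF B z s t'] biset_right_mult[OF B z t t']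
  by simp

lemma biset_left_eq_right_inv:
  assumes B: "biset G B l r" and z: "z \<in> B" and s: "s \<in> carrier G" and t: "t \<in> carrier G"
    and eq: "l s z = r z t"
  shows "l (inv s) z = r z (inv t)"
proof -
  have "r (l (inv s) z) t = z"
    using biset_left_right[OF B z inv_closed[OF s] t] eq biset_left_mult[OF B z inv_closed[OF s] s]
      biset_left_one[OF B z] s by simp
  then show ?thesis
    using biset_right_cancel(1)[OF B biset_left_closed[OF B z inv_closed[OF s]] t] by simp
qed

lemma acts_on_twisted_action:
  assumes B: "biset G B l r" and \<rho>: "subgroup_morphism G Q \<rho>"
  shows "acts_on (G\<lparr>carrier := Q\<rparr> \<times>\<times> G) (twisted_action G l r \<rho>) B"
proof -
  interpret \<rho>: subgroup_morphism G Q \<rho> by (rule \<rho>)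
  have "twisted_action G l r \<rho> (u, s) (twisted_action G l r \<rho> (v, t) z) =
      twisted_action G l r \<rho> (u \<otimes> v, s \<otimes> t) z"
    if u: "u \<in> Q" and v: "v \<in> Q" and s: "s \<in> carrier G" and t: "t \<in> carrier G" and z: "z \<in> B"
    for u v s t z
  proof -
    have z': "r (r z (inv t)) (inv s) \<in> B" using biset_right_closed[OF B] z s t by simp
    have "twisted_action G l r \<rho> (u, s) (twisted_action G l r \<rho> (v, t) z)
        = l (\<rho> u) (l (\<rho> v) (r (r z (inv t)) (inv s)))"
      unfolding twisted_action_def
      using biset_left_right[OF B biset_right_closed[OF B z] \<rho>.\<theta>_closed[OF v]] s t by simp
    also have "\<dots> = l (\<rho> (u \<otimes> v)) (r z (inv t \<otimes> inv s))"
      using biset_left_mult[OF B z' \<rho>.\<theta>_closed[OF u] \<rho>.\<theta>_closed[OF v]] biset_right_mult[OF B z]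
        \<rho>.\<theta>_mult[OF u v] s t by simp
    finally show ?thesis unfolding twisted_action_def using s t by (simp add: inv_mult_group)
  qed
  then show ?thesis
    unfolding acts_on_def using biset_left_one[OF B] biset_right_one[OF B] \<rho>.\<theta>_one
    by (auto simp: twisted_action_def intro!: biset_left_closed[OF B] biset_right_closed[OF B] \<rho>.\<theta>_closed)
qed

lemma fixed_points_twisted_action_graph:
  assumes B: "biset G B l r" and \<rho>: "\<rho> ` P \<subseteq> carrier G" and \<chi>: "\<chi> ` P \<subseteq> carrier G"
  shows "fixed_points (twisted_action G l r \<rho>) B ((\<lambda>u. (u, \<chi> u)) ` P) =
    {z \<in> B. \<forall>u\<in>P. l (\<rho> u) z = r z (\<chi> u)}"
  using biset_fixed_iff[OF B] \<rho> \<chi> unfolding fixed_points_def twisted_action_def by (auto simp: subset_iff)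

lemma biset_iso_if_twisted_equivariant:
  assumes B: "biset G B l r" and Q: "subgroup Q G" and \<phi>: "subgroup_morphism G Q \<phi>"
    and f: "equivariant_bij (G\<lparr>carrier := Q\<rparr> \<times>\<times> G) (twisted_action G l r (\<lambda>u. u)) B
      (twisted_action G l r \<phi>) B f"
  shows "biset_iso Q (carrier G) B l r B (\<lambda>u x. l (\<phi> u) x) r"
proof -
  have fB: "f x \<in> B" if "x \<in> B" for x using f that unfolding equivariant_bij_def bij_betw_def by blast
  have eqv: "f (twisted_action G l r (\<lambda>u. u) (u, t) x) = twisted_action G l r \<phi> (u, t) (f x)"
    if "u \<in> Q" "t \<in> carrier G" "x \<in> B" for u t x
    using f that unfolding equivariant_bij_def by auto
  show ?thesis unfolding biset_iso_def
  proof (intro exI conjI ballI)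
    show "bij_betw f B B" using f unfolding equivariant_bij_def by blast
  next
    fix x a assume x: "x \<in> B" and a: "a \<in> Q"
    then show "f (l a x) = l (\<phi> a) (f x)"
      using eqv[OF a one_closed x] fB[OF x] biset_right_one[OF B] by (simp add: twisted_action_def)
  next
    fix x b assume x: "x \<in> B" and b: "b \<in> carrier G"
    then show "f (r x b) = r (f x) b"
      using eqv[OF subgroup.one_closed[OF Q] inv_closed[OF b] x] fB[OF x] biset_right_closed[OF B]
        subgroup_morphism.\<theta>_one[OF \<phi>] biset_left_one[OF B]
      by (simp add: twisted_action_def)
  qed
qed

context
  fixes B l r
  assumes B: "biset G B l r"
    and right_free: "\<And>z t. z \<in> B \<Longrightarrow> t \<in> carrier G \<Longrightarrow> r z t = z \<Longrightarrow> t = \<one>"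
begin

lemma right_free_inj:
  assumes z: "z \<in> B" and t: "t \<in> carrier G" and t': "t' \<in> carrier G" and eq: "r z t = r z t'"
  shows "t = t'"
proof -
  have "r z (t \<otimes> inv t') = z"
    using biset_right_mult[OF B z t] biset_right_cancel(1)[OF B z t'] eq t' by (metis inv_closed)
  then have "t \<otimes> inv t' = \<one>" using right_free z t t' by simp
  then show ?thesis using t t' by (metis inv_closed inv_inv inv_equality)
qed

lemma twisted_domain_subgroup:
  assumes \<rho>: "subgroup_morphism G Q \<rho>" and z: "z \<in> B"
  shows "subgroup {u \<in> Q. \<exists>t\<in>carrier G. l (\<rho> u) z = r z t} G"
proof -
  interpret \<rho>: subgroup_morphism G Q \<rho> by (rule \<rho>)
  show ?thesis
  proof (rule subgroupI)
    show "{u \<in> Q. \<exists>t\<in>carrier G. l (\<rho> u) z = r z t} \<subseteq> carrier G" using \<rho>.R_closed by blast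
    have "l (\<rho> \<one>) z = r z \<one>" using \<rho>.\<theta>_one biset_left_one[OF B z] biset_right_one[OF B z] by simp
    then show "{u \<in> Q. \<exists>t\<in>carrier G. l (\<rho> u) z = r z t} \<noteq> {}"
      using subgroup.one_closed[OF \<rho>.subgroup_R] by blast
  next
    fix u assume "u \<in> {u \<in> Q. \<exists>t\<in>carrier G. l (\<rho> u) z = r z t}"
    then obtain t where u: "u \<in> Q" and t: "t \<in> carrier G" and ut: "l (\<rho> u) z = r z t" by blast
    then have "l (\<rho> (inv u)) z = r z (inv t)"
      using biset_left_eq_right_inv[OF B z \<rho>.\<theta>_closed[OF u] t ut] by (simp add: \<rho>.\<theta>_inv)
    then show "inv u \<in> {u \<in> Q. \<exists>t\<in>carrier G. l (\<rho> u) z = r z t}"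
      using t u subgroup.m_inv_closed[OF \<rho>.subgroup_R] by auto
  next
    fix u v
    assume "u \<in> {u \<in> Q. \<exists>t\<in>carrier G. l (\<rho> u) z = r z t}" "v \<in> {u \<in> Q. \<exists>t\<in>carrier G. l (\<rho> u) z = r z t}"
    then obtain t t' where u: "u \<in> Q" "t \<in> carrier G" "l (\<rho> u) z = r z t"
      and v: "v \<in> Q" "t' \<in> carrier G" "l (\<rho> v) z = r z t'" by blast
    then have "l (\<rho> (u \<otimes> v)) z = r z (t \<otimes> t')"
      using biset_left_eq_right_mult[OF B z \<rho>.\<theta>_closed[OF u(1)] \<rho>.\<theta>_closed[OF v(1)]] by (simp add: \<rho>.\<theta>_mult)
    then show "u \<otimes> v \<in> {u \<in> Q. \<exists>t\<in>carrier G. l (\<rho> u) z = r z t}"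
      using u v subgroup.m_closed[OF \<rho>.subgroup_R] by blast
  qed
qed

text \<open>Right freeness makes every point stabilizer of the twisted \<open>Q \<times> G\<close>-action the graph of a
  map on a subgroup of \<open>Q\<close>.\<close>

lemma stabilizer_twisted_action_graph:
  assumes \<rho>: "subgroup_morphism G Q \<rho>" and z: "z \<in> B"
  obtains P \<chi> where "subgroup P G" "P \<subseteq> Q" "\<chi> ` P \<subseteq> carrier G"
    "stabilizer (G\<lparr>carrier := Q\<rparr> \<times>\<times> G) (twisted_action G l r \<rho>) z = (\<lambda>u. (u, \<chi> u)) ` P"
proof -
  interpret \<rho>: subgroup_morphism G Q \<rho> by (rule \<rho>)
  define P where "P = {u \<in> Q. \<exists>t\<in>carrier G. l (\<rho> u) z = r z t}"
  define \<chi> where "\<chi> u = (SOME t. t \<in> carrier G \<and> l (\<rho> u) z = r z t)" for u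
  have \<chi>: "\<chi> u \<in> carrier G \<and> l (\<rho> u) z = r z (\<chi> u)" if "u \<in> P" for u
    using that someI_ex[of "\<lambda>t. t \<in> carrier G \<and> l (\<rho> u) z = r z t"]
    unfolding P_def \<chi>_def by blast
  have "(u, t) \<in> stabilizer (G\<lparr>carrier := Q\<rparr> \<times>\<times> G) (twisted_action G l r \<rho>) z \<longleftrightarrow>
      u \<in> P \<and> t = \<chi> u" for u t
  proof -
    have "(u, t) \<in> stabilizer (G\<lparr>carrier := Q\<rparr> \<times>\<times> G) (twisted_action G l r \<rho>) z \<longleftrightarrow>
        u \<in> Q \<and> t \<in> carrier G \<and> l (\<rho> u) z = r z t"
      unfolding stabilizer_def twisted_action_def using biset_fixed_iff[OF B z \<rho>.\<theta>_closed] by auto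
    also have "\<dots> \<longleftrightarrow> u \<in> P \<and> t = \<chi> u"
    proof
      assume ut: "u \<in> Q \<and> t \<in> carrier G \<and> l (\<rho> u) z = r z t"
      then have u: "u \<in> P" unfolding P_def by blast
      then have "r z t = r z (\<chi> u)" using ut \<chi> by simp
      with u ut \<chi> show "u \<in> P \<and> t = \<chi> u" using right_free_inj[OF z] by blast
    next
      assume "u \<in> P \<and> t = \<chi> u"
      then show "u \<in> Q \<and> t \<in> carrier G \<and> l (\<rho> u) z = r z t" using \<chi> unfolding P_def by blast
    qed
    finally show ?thesis .
  qed
  then have "stabilizer (G\<lparr>carrier := Q\<rparr> \<times>\<times> G) (twisted_action G l r \<rho>) z = (\<lambda>u. (u, \<chi> u)) ` P"
    by (auto simp: image_iff)
  moreover have "subgroup P G" unfolding P_def by (rule twisted_domain_subgroup[OF \<rho> z])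
  moreover have "P \<subseteq> Q" "\<chi> ` P \<subseteq> carrier G" using \<chi> unfolding P_def by auto
  ultimately show ?thesis using that by blast
qed

lemma same_marks_twisted_actions:
  assumes Q: "subgroup Q G" and \<phi>: "subgroup_morphism G Q \<phi>"
    and marks: "\<And>P \<chi>. subgroup P G \<Longrightarrow> P \<subseteq> Q \<Longrightarrow> \<chi> ` P \<subseteq> carrier G \<Longrightarrow>
      card {z \<in> B. \<forall>u\<in>P. l u z = r z (\<chi> u)} = card {z \<in> B. \<forall>u\<in>P. l (\<phi> u) z = r z (\<chi> u)}"
  shows "same_marks (G\<lparr>carrier := Q\<rparr> \<times>\<times> G) (twisted_action G l r (\<lambda>u. u)) B (twisted_action G l r \<phi>) B"
proof -
  let ?H = "G\<lparr>carrier := Q\<rparr> \<times>\<times> G"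
  have id: "subgroup_morphism G Q (\<lambda>u. u)" by (rule subgroup_morphism_id[OF Q])
  have marks_graph: "card (fixed_points (twisted_action G l r (\<lambda>u. u)) B K) =
      card (fixed_points (twisted_action G l r \<phi>) B K)"
    if "subgroup P G" "P \<subseteq> Q" "\<chi> ` P \<subseteq> carrier G" "K = (\<lambda>u. (u, \<chi> u)) ` P" for K P \<chi>
  proof -
    have P: "P \<subseteq> carrier G" "\<phi> ` P \<subseteq> carrier G"
      using that(2) subgroup.subset[OF Q] subgroup_morphism.\<theta>_closed[OF \<phi>] by auto
    have "fixed_points (twisted_action G l r (\<lambda>u. u)) B K = {z \<in> B. \<forall>u\<in>P. l u z = r z (\<chi> u)}"
      using fixed_points_twisted_action_graph[OF B, of "\<lambda>u. u" P \<chi>] P that(3,4) by simp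
    moreover have "fixed_points (twisted_action G l r \<phi>) B K = {z \<in> B. \<forall>u\<in>P. l (\<phi> u) z = r z (\<chi> u)}"
      using fixed_points_twisted_action_graph[OF B P(2) that(3)] that(4) by simp
    ultimately show ?thesis using marks[OF that(1-3)] by simp
  qed
  show ?thesis unfolding same_marks_def
  proof
    fix K assume "K \<in> stabilizer ?H (twisted_action G l r (\<lambda>u. u)) ` B \<union> stabilizer ?H (twisted_action G l r \<phi>) ` B"
    then obtain z \<rho> where "z \<in> B" "subgroup_morphism G Q \<rho>" "K = stabilizer ?H (twisted_action G l r \<rho>) z"
      using id \<phi> by blast
    then obtain P \<chi> where "subgroup P G" "P \<subseteq> Q" "\<chi> ` P \<subseteq> carrier G" "K = (\<lambda>u. (u, \<chi> u)) ` P"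
      using stabilizer_twisted_action_graph by metis
    then show "card (fixed_points (twisted_action G l r (\<lambda>u. u)) B K) =
        card (fixed_points (twisted_action G l r \<phi>) B K)" by (rule marks_graph)
  qed
qed

lemma biset_iso_twist_if_same_graph_marks:
  assumes fin: "finite (carrier G)" and finB: "finite B"
    and Q: "subgroup Q G" and \<phi>: "subgroup_morphism G Q \<phi>"
    and marks: "\<And>P \<chi>. subgroup P G \<Longrightarrow> P \<subseteq> Q \<Longrightarrow> \<chi> ` P \<subseteq> carrier G \<Longrightarrow>
      card {z \<in> B. \<forall>u\<in>P. l u z = r z (\<chi> u)} = card {z \<in> B. \<forall>u\<in>P. l (\<phi> u) z = r z (\<chi> u)}"
  shows "biset_iso Q (carrier G) B l r B (\<lambda>u x. l (\<phi> u) x) r"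
proof -
  let ?H = "G\<lparr>carrier := Q\<rparr> \<times>\<times> G"
  have H: "group ?H" by (intro DirProd_group subgroup.subgroup_is_group[OF Q is_group] is_group)
  have "finite (carrier ?H)" using fin finite_subset[OF subgroup.subset[OF Q] fin] by simp
  moreover have id: "subgroup_morphism G Q (\<lambda>u. u)" by (rule subgroup_morphism_id[OF Q])
  ultimately obtain f where "equivariant_bij ?H (twisted_action G l r (\<lambda>u. u)) B (twisted_action G l r \<phi>) B f"
    using group.equivariant_bij_if_same_marks[OF H _ acts_on_twisted_action[OF B id]
        acts_on_twisted_action[OF B \<phi>] finB finB same_marks_twisted_actions[OF Q \<phi> marks]] by blast
  then show ?thesis by (rule biset_iso_if_twisted_equivariant[OF B Q \<phi>])
qed

end

end

section \<open>The left semicharacteristic biset\<close>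

definition fusion_morphisms :: "('a, 'm) monoid_scheme \<Rightarrow> ('a set \<Rightarrow> 'a set \<Rightarrow> ('a \<Rightarrow> 'a) set) \<Rightarrow>
    ('a set \<times> ('a \<Rightarrow> 'a)) set" where
  "fusion_morphisms G F = {q. subgroup (fst q) G \<and> snd q \<in> F (fst q) (carrier G)}"

definition fusion_extensions :: "('a, 'm) monoid_scheme \<Rightarrow> ('a set \<Rightarrow> 'a set \<Rightarrow> ('a \<Rightarrow> 'a) set) \<Rightarrow>
    ('a set \<times> ('a \<Rightarrow> 'a)) \<Rightarrow> ('a set \<times> ('a \<Rightarrow> 'a)) set" where
  "fusion_extensions G F p = {q \<in> fusion_morphisms G F. fst p \<subset> fst q \<and> restrict (snd q) (fst p) = snd p}"

text \<open>Each class of \<open>S \<times>\<^bsub>(R, \<theta>)\<^esub> S\<close> has \<open>|R|\<close> elements, so \<open>|R|\<close> copies make fixed classes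
  countable by pairs \<open>(x, y) \<in> S \<times> S\<close>.\<close>

definition fusion_biset :: "('a, 'm) monoid_scheme \<Rightarrow> ('a set \<Rightarrow> 'a set \<Rightarrow> ('a \<Rightarrow> 'a) set) \<Rightarrow>
    ('a set \<times> ('a \<Rightarrow> 'a) \<Rightarrow> nat) \<Rightarrow> (('a \<times> 'a) set \<times> nat) set" where
  "fusion_biset G F k = copies_biset G (fusion_morphisms G F) (\<lambda>q. card (fst q) * k q)"

context group
begin

context
  fixes F :: "'a set \<Rightarrow> 'a set \<Rightarrow> ('a \<Rightarrow> 'a) set"
  assumes fusion: "fusion_system G F" and fin: "finite (carrier G)"
begin

lemma fusion_morphisms_subgroup_morphism:
  "q \<in> fusion_morphisms G F \<Longrightarrow> subgroup_morphism G (fst q) (snd q) \<and> snd q \<in> extensional (fst q)"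
  unfolding fusion_morphisms_def using fusion_subgroup_morphism[OF fusion] fusion_morphism[OF fusion] by blast

lemma biset_of_copies_fusion_morphisms: "biset_of_copies G (fusion_morphisms G F)"
  using fusion_morphisms_subgroup_morphism
  by (intro biset_of_copies.intro biset_of_copies_axioms.intro is_group) auto

lemma finite_fusion_morphisms: "finite (fusion_morphisms G F)"
proof (rule finite_subset)
  show "fusion_morphisms G F \<subseteq> Sigma (Pow (carrier G)) (\<lambda>R. R \<rightarrow>\<^sub>E carrier G)"
  proof
    fix q assume q: "q \<in> fusion_morphisms G F"
    then have sq: "snd q \<in> F (fst q) (carrier G)" and "fst q \<subseteq> carrier G"
      unfolding fusion_morphisms_def by (auto simp: subgroup.subset)
    moreover have "snd q \<in> extensional (fst q)" "snd q ` fst q \<subseteq> carrier G"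
      using fusion_morphism[OF fusion sq] by auto
    ultimately show "q \<in> Sigma (Pow (carrier G)) (\<lambda>R. R \<rightarrow>\<^sub>E carrier G)"
      by (cases q) (auto simp: PiE_def Pi_def)
  qed
  show "finite (Sigma (Pow (carrier G)) (\<lambda>R. R \<rightarrow>\<^sub>E carrier G))"
    using fin by (intro finite_SigmaI finite_PiE) (auto intro: finite_subset)
qed

lemma fusion_extensions_grow:
  assumes "p \<in> fusion_morphisms G F" and "q \<in> fusion_extensions G F p"
  shows "q \<in> fusion_morphisms G F" and "card (fst p) < card (fst q)"
proof -
  show q: "q \<in> fusion_morphisms G F" using assms(2) unfolding fusion_extensions_def by simp
  have "fst q \<subseteq> carrier G" using q unfolding fusion_morphisms_def by (simp add: subgroup.subset)
  moreover have "fst p \<subset> fst q" using assms(2) unfolding fusion_extensions_def by simp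
  ultimately show "card (fst p) < card (fst q)" using psubset_card_mono finite_subset fin by blast
qed

lemma exists_fusion_weights:
  obtains k :: "'a set \<times> ('a \<Rightarrow> 'a) \<Rightarrow> nat" and c :: "nat \<Rightarrow> nat"
  where "\<And>m. 0 < c m"
    and "\<And>p. p \<in> fusion_morphisms G F \<Longrightarrow> k p + (\<Sum>q\<in>fusion_extensions G F p. k q) = c (card (fst p))"
proof -
  have "\<exists>(k :: 'a set \<times> ('a \<Rightarrow> 'a) \<Rightarrow> nat) (c :: nat \<Rightarrow> nat). (\<forall>m. 0 < c m) \<and>
      (\<forall>p\<in>fusion_morphisms G F. k p + (\<Sum>q\<in>fusion_extensions G F p. k q) = c (card (fst p)))"
    by (rule exists_level_weights[OF finite_fusion_morphisms]) (auto dest: fusion_extensions_grow)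
  then show ?thesis using that by blast
qed

context
  fixes k :: "'a set \<times> ('a \<Rightarrow> 'a) \<Rightarrow> nat" and c :: "nat \<Rightarrow> nat"
  assumes c_pos: "\<And>m. 0 < c m"
    and k: "\<And>p. p \<in> fusion_morphisms G F \<Longrightarrow> k p + (\<Sum>q\<in>fusion_extensions G F p. k q) = c (card (fst p))"
begin

lemma sum_weights_over_extensions:
  assumes P: "subgroup P G" and \<psi>: "\<psi> \<in> extensional P"
  shows "(\<Sum>q\<in>{q \<in> fusion_morphisms G F. P \<subseteq> fst q \<and> restrict (snd q) P = \<psi>}. k q) =
    (if \<psi> \<in> F P (carrier G) then c (card P) else 0)"
proof (cases "\<psi> \<in> F P (carrier G)")
  case True
  then have p: "(P, \<psi>) \<in> fusion_morphisms G F" using P unfolding fusion_morphisms_def by simp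
  have "{q \<in> fusion_morphisms G F. P \<subseteq> fst q \<and> restrict (snd q) P = \<psi>} =
      insert (P, \<psi>) (fusion_extensions G F (P, \<psi>))"
  proof (intro equalityI subsetI)
    fix q assume q: "q \<in> {q \<in> fusion_morphisms G F. P \<subseteq> fst q \<and> restrict (snd q) P = \<psi>}"
    show "q \<in> insert (P, \<psi>) (fusion_extensions G F (P, \<psi>))"
    proof (cases "fst q = P")
      case True
      then have "snd q = \<psi>"
        using q fusion_morphisms_subgroup_morphism by (auto simp: extensional_restrict)
      with True show ?thesis by (simp add: prod_eq_iff)
    qed (use q in \<open>auto simp: fusion_extensions_def\<close>)
  qed (use p \<psi> in \<open>auto simp: fusion_extensions_def extensional_restrict\<close>)
  moreover have "finite (fusion_extensions G F (P, \<psi>))"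
    using finite_fusion_morphisms by (rule finite_subset[rotated]) (auto simp: fusion_extensions_def)
  ultimately show ?thesis using k[OF p] True by (simp add: fusion_extensions_def)
next
  case False
  have "restrict (snd q) P \<noteq> \<psi>" if "q \<in> fusion_morphisms G F" "P \<subseteq> fst q" for q
    using that False fusion_restrict[OF fusion _ P] unfolding fusion_morphisms_def by auto
  then have "{q \<in> fusion_morphisms G F. P \<subseteq> fst q \<and> restrict (snd q) P = \<psi>} = {}" by blast
  then show ?thesis using False by (simp only: sum.empty if_False)
qed

lemma sum_weights_fixing_pair:
  assumes P: "subgroup P G" and \<chi>: "\<chi> ` P \<subseteq> carrier G" and x: "x \<in> carrier G" and y: "y \<in> carrier G"
  shows "(\<Sum>q\<in>fusion_morphisms G F. if \<forall>u\<in>P. inv x \<otimes> u \<otimes> x \<in> fst q \<and>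
      snd q (inv x \<otimes> u \<otimes> x) = y \<otimes> \<chi> u \<otimes> inv y then k q else 0) =
    (if restrict \<chi> P \<in> F P (carrier G) then c (card P) else 0)"
proof -
  have PG: "P \<subseteq> carrier G" using subgroup.subset[OF P] .
  define Px where "Px = (\<lambda>u. inv x \<otimes> u \<otimes> x) ` P"
  define \<psi> where "\<psi> = restrict (\<lambda>v. y \<otimes> \<chi> (x \<otimes> v \<otimes> inv x) \<otimes> inv y) Px"
  have "(\<Sum>q\<in>fusion_morphisms G F. if \<forall>u\<in>P. inv x \<otimes> u \<otimes> x \<in> fst q \<and>
      snd q (inv x \<otimes> u \<otimes> x) = y \<otimes> \<chi> u \<otimes> inv y then k q else 0) =
      (\<Sum>q\<in>{q \<in> fusion_morphisms G F. Px \<subseteq> fst q \<and> restrict (snd q) Px = \<psi>}. k q)"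
    using conjugate_condition_iff[OF PG x] finite_fusion_morphisms
    unfolding Px_def \<psi>_def by (simp add: sum.inter_filter)
  also have "\<dots> = (if \<psi> \<in> F Px (carrier G) then c (card Px) else 0)"
    using fusion_subgroup_conjugate[OF fusion P x]
    by (intro sum_weights_over_extensions) (auto simp: Px_def \<psi>_def)
  also have "\<dots> = (if restrict \<chi> P \<in> F P (carrier G) then c (card P) else 0)"
    using fusion_conjugate_twist_iff[OF fusion P \<chi> x y] card_conjugate[OF PG x]
    unfolding Px_def \<psi>_def by simp
  finally show ?thesis .
qed

lemma card_fixed_points_fusion_biset:
  assumes P: "subgroup P G" and \<chi>: "\<chi> ` P \<subseteq> carrier G"
  shows "card {z \<in> fusion_biset G F k. \<forall>u\<in>P. copies_left G u z = copies_right G z (\<chi> u)} =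
    card (carrier G) * card (carrier G) * (if restrict \<chi> P \<in> F P (carrier G) then c (card P) else 0)"
proof -
  let ?V = "fusion_morphisms G F"
  define fixing where "fixing q p \<longleftrightarrow> (\<forall>u\<in>P. inv (fst p) \<otimes> u \<otimes> fst p \<in> fst q \<and>
      snd q (inv (fst p) \<otimes> u \<otimes> fst p) = snd p \<otimes> \<chi> u \<otimes> inv (snd p))" for q p
  have PG: "P \<subseteq> carrier G" using subgroup.subset[OF P] .
  have "card {z \<in> fusion_biset G F k. \<forall>u\<in>P. copies_left G u z = copies_right G z (\<chi> u)} =
      (\<Sum>q\<in>?V. card (fst q) * k q *
        card {C \<in> tb_carrier G (fst q) (snd q). \<forall>u\<in>P. tb_left G u C = tb_right G C (\<chi> u)})"
  proof -
    interpret biset_of_copies G ?V by (rule biset_of_copies_fusion_morphisms)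
    show ?thesis unfolding fusion_biset_def
      by (rule card_fixed_points_copies_biset[OF fin finite_fusion_morphisms])
  qed
  also have "\<dots> = (\<Sum>q\<in>?V. k q * card {p \<in> carrier G \<times> carrier G. fixing q p})"
  proof (rule sum.cong[OF refl])
    fix q assume "q \<in> ?V"
    then interpret subgroup_morphism G "fst q" "snd q" using fusion_morphisms_subgroup_morphism by blast
    show "card (fst q) * k q * card {C \<in> tb_carrier G (fst q) (snd q). \<forall>u\<in>P. tb_left G u C = tb_right G C (\<chi> u)} =
        k q * card {p \<in> carrier G \<times> carrier G. fixing q p}"
    proof -
      have "{p \<in> carrier G \<times> carrier G. fixing q p} = {(x, y) \<in> carrier G \<times> carrier G.
          \<forall>u\<in>P. inv x \<otimes> u \<otimes> x \<in> fst q \<and> snd q (inv x \<otimes> u \<otimes> x) = y \<otimes> \<chi> u \<otimes> inv y}"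
        unfolding fixing_def by auto
      then show ?thesis using card_fixed_tb_classes[OF fin PG \<chi>] by (simp add: ac_simps)
    qed
  qed
  also have "\<dots> = (\<Sum>q\<in>?V. \<Sum>p\<in>carrier G \<times> carrier G. if fixing q p then k q else 0)"
    using fin by (simp add: sum.If_cases Int_def mult.commute)
  also have "\<dots> = (\<Sum>p\<in>carrier G \<times> carrier G. \<Sum>q\<in>?V. if fixing q p then k q else 0)"
    by (rule sum.swap)
  also have "\<dots> = (\<Sum>p\<in>carrier G \<times> carrier G. if restrict \<chi> P \<in> F P (carrier G) then c (card P) else 0)"
    using sum_weights_fixing_pair[OF P \<chi>] unfolding fixing_def by (intro sum.cong) auto
  finally show ?thesis by (simp add: card_cartesian_product)
qed

lemma biset_fusion_biset: "biset G (fusion_biset G F k) (copies_left G) (copies_right G)"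
  unfolding fusion_biset_def
  by (rule biset_of_copies.biset_copies_biset[OF biset_of_copies_fusion_morphisms])

lemma finite_fusion_biset: "finite (fusion_biset G F k)"
  unfolding fusion_biset_def
  by (rule biset_of_copies.finite_copies_biset[OF biset_of_copies_fusion_morphisms fin
        finite_fusion_morphisms])

lemma fusion_biset_right_free:
  "z \<in> fusion_biset G F k \<Longrightarrow> t \<in> carrier G \<Longrightarrow> copies_right G z t = z \<Longrightarrow> t = \<one>"
  unfolding fusion_biset_def
  by (rule biset_of_copies.copies_right_free[OF biset_of_copies_fusion_morphisms])

lemma fusion_biset_left_stable:
  assumes Q: "subgroup Q G" and \<phi>: "\<phi> \<in> F Q (carrier G)"
  shows "biset_iso Q (carrier G) (fusion_biset G F k) (copies_left G) (copies_right G)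
    (fusion_biset G F k) (\<lambda>u x. copies_left G (\<phi> u) x) (copies_right G)"
proof (rule biset_iso_twist_if_same_graph_marks[OF biset_fusion_biset fusion_biset_right_free fin
      finite_fusion_biset Q fusion_subgroup_morphism[OF fusion \<phi>]])
next
  fix P \<chi> assume P: "subgroup P G" and PQ: "P \<subseteq> Q" and \<chi>: "\<chi> ` P \<subseteq> carrier G"
  have inj: "inj_on \<phi> P" using fusion_morphism[OF fusion \<phi>] PQ inj_on_subset by blast
  have \<phi>P: "subgroup (\<phi> ` P) G" "card (\<phi> ` P) = card P"
    using fusion_image_subgroup[OF fusion \<phi> P PQ] by auto
  have \<chi>': "(\<chi> \<circ> inv_into P \<phi>) ` \<phi> ` P \<subseteq> carrier G" using \<chi> inv_into_f_f[OF inj] by auto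
  have "{z \<in> fusion_biset G F k. \<forall>u\<in>P. copies_left G (\<phi> u) z = copies_right G z (\<chi> u)} =
      {z \<in> fusion_biset G F k. \<forall>v\<in>\<phi> ` P. copies_left G v z = copies_right G z ((\<chi> \<circ> inv_into P \<phi>) v)}"
    using inv_into_f_f[OF inj] by auto
  then show "card {z \<in> fusion_biset G F k. \<forall>u\<in>P. copies_left G u z = copies_right G z (\<chi> u)} =
      card {z \<in> fusion_biset G F k. \<forall>u\<in>P. copies_left G (\<phi> u) z = copies_right G z (\<chi> u)}"
    using card_fixed_points_fusion_biset[OF P \<chi>]
      card_fixed_points_fusion_biset[OF \<phi>P(1) \<chi>']
      fusion_twist_iff[OF fusion \<phi> P PQ] \<phi>P(2) by simp
qed

lemma fusion_biset_transitive_subbiset: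
  assumes "transitive_subbiset G (fusion_biset G F k) (copies_left G) (copies_right G) Y"
  shows "\<exists>Q \<phi>. subgroup Q G \<and> \<phi> \<in> F Q (carrier G) \<and>
    biset_iso (carrier G) (carrier G) Y (copies_left G) (copies_right G) (tb_carrier G Q \<phi>) (tb_left G) (tb_right G)"
proof -
  obtain q where "q \<in> fusion_morphisms G F" and "biset_iso (carrier G) (carrier G) Y (copies_left G)
      (copies_right G) (tb_carrier G (fst q) (snd q)) (tb_left G) (tb_right G)"
    using biset_of_copies.transitive_subbiset_copies_biset[OF biset_of_copies_fusion_morphisms
        assms[unfolded fusion_biset_def]] by blast
  then show ?thesis unfolding fusion_morphisms_def by blast
qed

lemma fusion_biset_identity_subbiset:
  "\<exists>Y. subbiset G (fusion_biset G F k) (copies_left G) (copies_right G) Y \<and>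
    biset_iso (carrier G) (carrier G) Y (copies_left G) (copies_right G)
      (tb_carrier G (carrier G) id) (tb_left G) (tb_right G)"
proof -
  define \<iota> where "\<iota> = restrict (\<lambda>u. \<one> \<otimes> u \<otimes> inv \<one>) (carrier G)"
  have \<iota>: "\<iota> \<in> F (carrier G) (carrier G)" unfolding \<iota>_def
    by (rule fusion_conjugation[OF fusion subgroup_self subgroup_self one_closed]) auto
  then have q: "(carrier G, \<iota>) \<in> fusion_morphisms G F"
    unfolding fusion_morphisms_def using subgroup_self by simp
  have maximal: "fst q \<subseteq> carrier G" if "q \<in> fusion_morphisms G F" for q
    using that unfolding fusion_morphisms_def by (simp add: subgroup.subset)
  then have "fusion_extensions G F (carrier G, \<iota>) = {}"
    unfolding fusion_extensions_def by (auto dest!: maximal)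
  then have "0 < k (carrier G, \<iota>)" using k[OF q] c_pos by simp
  moreover have "0 < card (carrier G)" using fin by (auto simp: card_gt_0_iff)
  ultimately have "0 < card (fst (carrier G, \<iota>)) * k (carrier G, \<iota>)" by simp
  then have "subbiset G (fusion_biset G F k) (copies_left G) (copies_right G) (tb_carrier G (carrier G) \<iota> \<times> {0})"
    unfolding fusion_biset_def
    using biset_of_copies.subbiset_copy[OF biset_of_copies_fusion_morphisms q] by simp
  moreover have "tb_rel G (carrier G) \<iota> = tb_rel G (carrier G) id"
    unfolding tb_rel_def \<iota>_def by (intro Collect_cong ex_cong1) auto
  then have "tb_carrier G (carrier G) \<iota> = tb_carrier G (carrier G) id" unfolding tb_carrier_def by simp
  ultimately show ?thesis using biset_iso_copy by metis
qed

lemma fusion_biset_left_semichar: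
  "left_semichar_biset G F (fusion_biset G F k) (copies_left G) (copies_right G)"
  unfolding left_semichar_biset_def
  using biset_fusion_biset finite_fusion_biset fusion_biset_transitive_subbiset fusion_biset_left_stable
  by blast

end

lemma exists_left_semichar_biset_with_identity:
  "\<exists>(BX :: (('a \<times> 'a) set \<times> nat) set) l r. left_semichar_biset G F BX l r \<and>
    (\<exists>Y. subbiset G BX l r Y \<and>
      biset_iso (carrier G) (carrier G) Y l r (tb_carrier G (carrier G) id) (tb_left G) (tb_right G))"
proof -
  obtain k :: "'a set \<times> ('a \<Rightarrow> 'a) \<Rightarrow> nat" and c :: "nat \<Rightarrow> nat" where c_pos: "\<And>m. 0 < c m"
    and k: "\<And>p. p \<in> fusion_morphisms G F \<Longrightarrow> k p + (\<Sum>q\<in>fusion_extensions G F p. k q) = c (card (fst p))"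
    by (rule exists_fusion_weights) blast
  show ?thesis
    using fusion_biset_left_semichar[OF c_pos k] fusion_biset_identity_subbiset[OF c_pos k] by blast
qed

end

end

theorem proposition2:
  fixes p :: nat and S :: "('a, 'm) monoid_scheme"
    and F :: "'a set \<Rightarrow> 'a set \<Rightarrow> ('a \<Rightarrow> 'a) set"
  assumes "Factorial_Ring.prime p" and "finite_p_group p S" and "fusion_system S F"
  shows "\<exists>(BX :: (('a \<times> 'a) set \<times> nat) set) l r.
           left_semichar_biset S F BX l r \<and>
           (\<exists>Y. subbiset S BX l r Y \<and>
                biset_iso (carrier S) (carrier S) Y l r
                  (tb_carrier S (carrier S) id) (tb_left S) (tb_right S))"
proof -
  have "group S" and "finite (carrier S)" using assms(2) unfolding finite_p_group_def by auto
  then show ?thesis using group.exists_left_semichar_biset_with_identity assms(3) by blast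
qed

end
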